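(* Let $(E,\tau)$ be a locally solid vector lattice, where $\tau$ is locally interval complete solidly submetrisable, and let $F$ be a regular vector sublattice of $E$. Let $(x_\alpha)_{\alpha\in A}$ be a net in $F$ and let $x\in F$ be such that $x_\alpha\to x$ in $\tau$. If $A$ has a largest element $\alpha_{\mathrm{largest}}$, then $x=x_{\alpha_{\mathrm{largest}}}$. If $A$ has no largest element, then one can choose any $\widetilde\alpha_1\in A$, then find an $\alpha_1\in A$, then choose any $\widetilde\alpha_2\in A$, then find an $\alpha_2\in A$, etc., such that: (1) $\alpha_1<\alpha_2<\alpha_3<\dotsb$; (2) $\alpha_n>\widetilde\alpha_n$ for all $n\geq1$; (3) $x_{\alpha_n}$ uo-converges to $x$ in $F$ as $n\to\infty$. In particular, for arbitrary $A$ there exist indices $\alpha_1\leq\alpha_2\leq\alpha_3\leq\dotsb$ such that $x_{\alpha_n}$ uo-converges to $x$ in $F$, and if $A$ has no largest element these indices can be chosen with $\alpha_1<\alpha_2<\alpha_3<\dotsb$.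
   Context: All vector lattices are real and Archimedean; linear topologies are Hausdorff. A locally solid topology on a vector lattice is a linear topology such that zero has a neighbourhood basis of solid sets. A net $(x_\alpha)$ in a vector lattice $G$ order converges to $x$ in $G$ if there is a net $(y_\beta)$ in $G$ with $y_\beta\downarrow0$ such that for each $\beta_0$ there is $\alpha_0$ with $|x_\alpha-x|\leq y_{\beta_0}$ for all $\alpha\geq\alpha_0$; it uo-converges to $x$ in $G$ if $|x_\alpha-x|\wedge|y|$ order converges to $0$ in $G$ for every $y\in G$. A vector sublattice $F$ of $E$ is regular if every net in $F$ that order converges in $F$ to an element of $F$ also order converges in $E$ to it. A locally solid topology $\tau$ on $E$ is locally interval complete solidly submetrisable if for every $x\in E^+$ there exists a metrisable locally solid topology $\widetilde\tau_x$ on the band $B_x$ generated by $x$ such that $\tau|_{B_x}$ is finer than $\widetilde\tau_x$ and every $\widetilde\tau_x$-Cauchy sequence in $[0,x]$ is $\widetilde\tau_x$-convergent to an element of $[0,x]$. *)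

theory Defs
  imports "HOL-Analysis.Analysis" "HOL-Library.Lattice_Algebras"
begin

text \<open>Vector lattices are modelled as a type of class
  ordered_real_vector + lattice_ab_group_add_abs (so abs x = sup x (-x)).
  Sub-objects (sublattices, bands) are carrier sets.\<close>


definition directed_set :: "'i set \<Rightarrow> ('i \<Rightarrow> 'i \<Rightarrow> bool) \<Rightarrow> bool" where
  "directed_set A le \<longleftrightarrow> A \<noteq> {} \<and> (\<forall>a\<in>A. le a a)
     \<and> (\<forall>a\<in>A. \<forall>b\<in>A. \<forall>c\<in>A. le a b \<longrightarrow> le b c \<longrightarrow> le a c)
     \<and> (\<forall>a\<in>A. \<forall>b\<in>A. \<exists>c\<in>A. le a c \<and> le b c)"

definition strictly :: "('i \<Rightarrow> 'i \<Rightarrow> bool) \<Rightarrow> 'i \<Rightarrow> 'i \<Rightarrow> bool" where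
  "strictly le a b \<longleftrightarrow> le a b \<and> \<not> le b a"

definition archimedean_vl :: "'a::{ordered_real_vector,lattice_ab_group_add_abs} set \<Rightarrow> bool" where
  "archimedean_vl S \<longleftrightarrow> (\<forall>x\<in>S. \<forall>y\<in>S. (\<forall>n::nat. real n *\<^sub>R x \<le> y) \<longrightarrow> x \<le> 0)"

definition vector_sublattice :: "'a::{ordered_real_vector,lattice_ab_group_add_abs} set \<Rightarrow> bool" where
  "vector_sublattice S \<longleftrightarrow> 0 \<in> S \<and> (\<forall>x\<in>S. \<forall>y\<in>S. x + y \<in> S \<and> sup x y \<in> S \<and> inf x y \<in> S)
     \<and> (\<forall>c. \<forall>x\<in>S. c *\<^sub>R x \<in> S)"

definition solid_in :: "'a::{ordered_real_vector,lattice_ab_group_add_abs} set \<Rightarrow> 'a set \<Rightarrow> bool" where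
  "solid_in S V \<longleftrightarrow> V \<subseteq> S \<and> (\<forall>x\<in>V. \<forall>y\<in>S. \<bar>y\<bar> \<le> \<bar>x\<bar> \<longrightarrow> y \<in> V)"

definition linear_topology_on :: "'a::{ordered_real_vector,lattice_ab_group_add_abs} set \<Rightarrow> 'a topology \<Rightarrow> bool" where
  "linear_topology_on S T \<longleftrightarrow> topspace T = S \<and> Hausdorff_space T
     \<and> continuous_map (prod_topology T T) T (\<lambda>(x,y). x + y)
     \<and> continuous_map (prod_topology euclideanreal T) T (\<lambda>(c,x). c *\<^sub>R x)"

definition locally_solid_on :: "'a::{ordered_real_vector,lattice_ab_group_add_abs} set \<Rightarrow> 'a topology \<Rightarrow> bool" where
  "locally_solid_on S T \<longleftrightarrow> linear_topology_on S T \<and>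
     (\<forall>U. openin T U \<and> 0 \<in> U \<longrightarrow>
        (\<exists>V W. solid_in S V \<and> openin T W \<and> 0 \<in> W \<and> W \<subseteq> V \<and> V \<subseteq> U))"

definition net_tendsto :: "'b topology \<Rightarrow> 'i set \<Rightarrow> ('i \<Rightarrow> 'i \<Rightarrow> bool) \<Rightarrow> ('i \<Rightarrow> 'b) \<Rightarrow> 'b \<Rightarrow> bool" where
  "net_tendsto T A le xs x \<longleftrightarrow> x \<in> topspace T \<and>
     (\<forall>U. openin T U \<and> x \<in> U \<longrightarrow> (\<exists>a0\<in>A. \<forall>a\<in>A. le a0 a \<longrightarrow> xs a \<in> U))"

definition tvs_cauchy :: "'a::{ordered_real_vector,lattice_ab_group_add_abs} topology \<Rightarrow> (nat \<Rightarrow> 'a) \<Rightarrow> bool" where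
  "tvs_cauchy T s \<longleftrightarrow> (\<forall>U. openin T U \<and> 0 \<in> U \<longrightarrow> (\<exists>N. \<forall>m\<ge>N. \<forall>n\<ge>N. s n - s m \<in> U))"

text \<open>The dominating net is indexed by a directed subset of
  the element type 'a, which is no loss of generality.\<close>
definition order_conv_in :: "'a::{ordered_real_vector,lattice_ab_group_add_abs} set \<Rightarrow>
    'i set \<Rightarrow> ('i \<Rightarrow> 'i \<Rightarrow> bool) \<Rightarrow> ('i \<Rightarrow> 'a) \<Rightarrow> 'a \<Rightarrow> bool" where
  "order_conv_in G A le xs x \<longleftrightarrow>
     (\<exists>(B::'a set) (le'::'a \<Rightarrow> 'a \<Rightarrow> bool) (y::'a \<Rightarrow> 'a).
        directed_set B le' \<and> (\<forall>b\<in>B. y b \<in> G)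
        \<and> (\<forall>b\<in>B. \<forall>b'\<in>B. le' b b' \<longrightarrow> y b' \<le> y b)
        \<and> (\<forall>b\<in>B. 0 \<le> y b)
        \<and> (\<forall>z\<in>G. (\<forall>b\<in>B. z \<le> y b) \<longrightarrow> z \<le> 0)
        \<and> (\<forall>b0\<in>B. \<exists>a0\<in>A. \<forall>a\<in>A. le a0 a \<longrightarrow> \<bar>xs a - x\<bar> \<le> y b0))"

definition uo_conv_in :: "'a::{ordered_real_vector,lattice_ab_group_add_abs} set \<Rightarrow>
    'i set \<Rightarrow> ('i \<Rightarrow> 'i \<Rightarrow> bool) \<Rightarrow> ('i \<Rightarrow> 'a) \<Rightarrow> 'a \<Rightarrow> bool" where
  "uo_conv_in G A le xs x \<longleftrightarrow>
     (\<forall>y\<in>G. order_conv_in G A le (\<lambda>a. inf \<bar>xs a - x\<bar> \<bar>y\<bar>) 0)"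

text \<open>Regular sublattice F of the whole space (nets indexed by directed subsets of 'a).\<close>
definition regular_sublattice :: "'a::{ordered_real_vector,lattice_ab_group_add_abs} set \<Rightarrow> bool" where
  "regular_sublattice F \<longleftrightarrow> vector_sublattice F \<and>
     (\<forall>(A::'a set) le (xs::'a \<Rightarrow> 'a) x. directed_set A le \<and> (\<forall>a\<in>A. xs a \<in> F) \<and> x \<in> F
        \<and> order_conv_in F A le xs x \<longrightarrow> order_conv_in UNIV A le xs x)"

definition ideal_in :: "'a::{ordered_real_vector,lattice_ab_group_add_abs} set \<Rightarrow> bool" where
  "ideal_in I \<longleftrightarrow> 0 \<in> I \<and> (\<forall>x\<in>I. \<forall>y\<in>I. x + y \<in> I) \<and> (\<forall>c. \<forall>x\<in>I. c *\<^sub>R x \<in> I)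
     \<and> solid_in UNIV I"

definition band :: "'a::{ordered_real_vector,lattice_ab_group_add_abs} set \<Rightarrow> bool" where
  "band B \<longleftrightarrow> ideal_in B \<and>
     (\<forall>D s. D \<subseteq> B \<and> (\<forall>d\<in>D. d \<le> s) \<and> (\<forall>u. (\<forall>d\<in>D. d \<le> u) \<longrightarrow> s \<le> u) \<longrightarrow> s \<in> B)"

definition band_gen :: "'a::{ordered_real_vector,lattice_ab_group_add_abs} \<Rightarrow> 'a set" where
  "band_gen x = \<Inter>{B. band B \<and> x \<in> B}"

definition lic_solidly_submetrisable :: "'a::{ordered_real_vector,lattice_ab_group_add_abs} topology \<Rightarrow> bool" where
  "lic_solidly_submetrisable \<tau> \<longleftrightarrow>
     (\<forall>x\<ge>0. \<exists>T. locally_solid_on (band_gen x) T \<and> metrizable_space T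
        \<and> (\<forall>U. openin T U \<longrightarrow> openin (subtopology \<tau> (band_gen x)) U)
        \<and> (\<forall>s. (\<forall>n. s n \<in> {0..x}) \<and> tvs_cauchy T s \<longrightarrow>
               (\<exists>l\<in>{0..x}. net_tendsto T UNIV (\<le>) s l)))"

end

theory Submission
  imports Defs
begin

text \<open>If the index set has a largest element, the Hausdorff property pins the limit down.
  Otherwise the indices \<open>\<alpha> k\<close> are chosen one at a time, strictly above the previous one and
  the prescribed one, and so late that \<open>|x_(\<alpha> k) - x| \<and> u N\<close> lies in the \<open>(k + 1)\<close>-st member
  of a solid neighbourhood base of \<open>\<tau>~_(u N)\<close> for every \<open>N \<le> k\<close>, where
  \<open>u N = |x| + |x_(\<alpha> 0)| + \<dots> + |x_(\<alpha> (N - 1))|\<close>. Interval completeness of \<open>\<tau>~_(u N)\<close>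
  makes these truncations order null in \<open>E\<close>: the limits of their running maxima dominate them
  and have infimum zero. An archimedean argument shows that every \<open>h \<ge> 0\<close> below all eventual
  upper bounds of \<open>|x_(\<alpha> k) - x| \<and> |y|\<close> is disjoint from every \<open>u N\<close>, hence from these
  elements, hence zero. Finally, regularity of \<open>F\<close> makes suprema in \<open>F\<close> of bounded directed
  sets suprema in \<open>E\<close>, which turns this into order convergence in \<open>F\<close>.\<close>

section \<open>Inequalities in vector lattices\<close>

lemma sup_le_add_of_nonneg:
  fixes a b :: "'a::lattice_ab_group_add"
  assumes "0 \<le> a" "0 \<le> b"
  shows "sup a b \<le> a + b"
  using assms by (simp add: add_increasing add_increasing2)

lemma inf_add_le_add_inf:
  fixes a p q :: "'a::lattice_ab_group_add"
  assumes "0 \<le> a" "0 \<le> p" "0 \<le> q"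
  shows "inf a (p + q) \<le> inf a p + inf a q"
proof -
  have "inf a p + inf a q = inf (inf (a + a) (a + q)) (inf (p + a) (p + q))"
    by (simp add: add_inf_distrib_left add_inf_distrib_right inf_assoc inf_commute inf_left_commute)
  moreover have "inf a (p + q) \<le> a + a" "inf a (p + q) \<le> a + q" "inf a (p + q) \<le> p + a"
    using assms by (auto intro: le_infI1 add_increasing add_increasing2)
  ultimately show ?thesis by simp
qed

lemma abs_inf_diff_inf_le:
  fixes a b c :: "'a::lattice_ab_group_add_abs"
  shows "\<bar>inf a c - inf b c\<bar> \<le> \<bar>a - b\<bar>"
proof -
  have one_side: "inf a c - inf b c \<le> \<bar>a - b\<bar>" for a b
  proof -
    have "inf a c \<le> inf (b + \<bar>a - b\<bar>) (c + \<bar>a - b\<bar>)"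
      by (intro inf_mono) (auto simp: abs_ge_self[of "a - b", simplified diff_le_eq add.commute])
    also have "\<dots> = inf b c + \<bar>a - b\<bar>" by (simp add: add_inf_distrib_right)
    finally show ?thesis by (metis add.commute diff_le_eq)
  qed
  have "- (inf a c - inf b c) \<le> \<bar>a - b\<bar>"
    using one_side[of b a] by (metis abs_minus_commute minus_diff_eq)
  then show ?thesis using one_side[of a b] by (rule abs_leI[rotated])
qed

lemma inf_pos_part_neg_part:
  fixes a :: "'a::lattice_ab_group_add_abs"
  shows "inf (sup a 0) (sup (- a) 0) = 0"
proof -
  have "sup (sup a 0) (sup (- a) 0) = \<bar>a\<bar>"
    by (metis abs_ge_zero abs_lattice sup.absorb1 sup.assoc sup.commute sup.left_commute)
  moreover have "sup a 0 + sup (- a) 0 = \<bar>a\<bar>"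
    using abs_prts[of a] by (simp add: pprt_def nprt_def neg_inf_eq_sup)
  ultimately show ?thesis
    using add_eq_inf_sup[of "sup a 0" "sup (- a) 0"] by simp
qed

lemma scaleR_inf_distrib:
  fixes a b :: "'a::{ordered_real_vector,lattice_ab_group_add_abs}"
  assumes "0 \<le> c"
  shows "c *\<^sub>R inf a b = inf (c *\<^sub>R a) (c *\<^sub>R b)"
proof (cases "c = 0")
  case False
  have "(1 / c) *\<^sub>R inf (c *\<^sub>R a) (c *\<^sub>R b) \<le> (1 / c) *\<^sub>R (c *\<^sub>R a)"
    using assms by (intro scaleR_left_mono) auto
  moreover have "(1 / c) *\<^sub>R inf (c *\<^sub>R a) (c *\<^sub>R b) \<le> (1 / c) *\<^sub>R (c *\<^sub>R b)"
    using assms by (intro scaleR_left_mono) auto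
  ultimately have "(1 / c) *\<^sub>R inf (c *\<^sub>R a) (c *\<^sub>R b) \<le> inf a b"
    using False by simp
  then have "c *\<^sub>R ((1 / c) *\<^sub>R inf (c *\<^sub>R a) (c *\<^sub>R b)) \<le> c *\<^sub>R inf a b"
    using assms by (rule scaleR_left_mono)
  then have "inf (c *\<^sub>R a) (c *\<^sub>R b) \<le> c *\<^sub>R inf a b"
    using False by simp
  moreover have "c *\<^sub>R inf a b \<le> inf (c *\<^sub>R a) (c *\<^sub>R b)"
    using assms by (simp add: scaleR_left_mono)
  ultimately show ?thesis by (rule antisym[rotated])
qed simp

lemma inf_scaleR_eq_0:
  fixes g n :: "'a::{ordered_real_vector,lattice_ab_group_add_abs}"
  assumes "0 \<le> g" "0 \<le> n" "inf g n = 0" "0 \<le> k"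
  shows "inf (k *\<^sub>R g) n = 0"
proof -
  have "inf (k *\<^sub>R g) n \<le> 0"
  proof (cases "k \<le> 1")
    case True
    then have "k *\<^sub>R g \<le> g" using assms scaleR_right_mono[of k 1 g] by simp
    then show ?thesis using assms(3) by (metis inf_mono order_refl)
  next
    case False
    then have "n \<le> k *\<^sub>R n" using assms scaleR_right_mono[of 1 k n] by simp
    then have "inf (k *\<^sub>R g) n \<le> k *\<^sub>R inf g n"
      using scaleR_inf_distrib[OF assms(4), of g n] by (metis inf_mono order_refl)
    then show ?thesis using assms(3) by simp
  qed
  moreover have "0 \<le> inf (k *\<^sub>R g) n" using assms by (simp add: scaleR_nonneg_nonneg)
  ultimately show ?thesis by (rule antisym)
qed

lemma inf_le_inf_add_excess:
  fixes a b p :: "'a::lattice_ab_group_add"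
  assumes "0 \<le> a" "0 \<le> p"
  shows "inf a b \<le> inf a p + sup (b - p) 0"
proof -
  have "inf a b \<le> inf a (p + sup (b - p) 0)"
    by (intro inf_mono order_refl) (metis add.commute diff_le_eq sup.cobounded1)
  also have "\<dots> \<le> inf a p + inf a (sup (b - p) 0)"
    using assms by (intro inf_add_le_add_inf) auto
  also have "\<dots> \<le> inf a p + sup (b - p) 0"
    by (simp add: add_left_mono)
  finally show ?thesis .
qed

lemma inf_scaleR_le_scaleR_inf:
  fixes a u :: "'a::{ordered_real_vector,lattice_ab_group_add_abs}"
  assumes "0 \<le> a" "1 \<le> r"
  shows "inf a (r *\<^sub>R u) \<le> r *\<^sub>R inf a u"
proof -
  have "a \<le> r *\<^sub>R a" using assms scaleR_right_mono[of 1 r a] by simp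
  then have "inf a (r *\<^sub>R u) \<le> inf (r *\<^sub>R a) (r *\<^sub>R u)" by (meson inf_mono order_refl)
  also have "\<dots> = r *\<^sub>R inf a u" using assms by (simp add: scaleR_inf_distrib)
  finally show ?thesis .
qed

text \<open>If \<open>h\<close> lies in the positive part of \<open>Y - j u\<close>, it is disjoint from the negative part,
  and so is \<open>j (h \<and> u)\<close>; since \<open>j u \<le> Y + (Y - j u)\<^sup>-\<close>, this gives \<open>j (h \<and> u) \<le> Y\<close>.\<close>
lemma scaleR_inf_le_of_le_excess:
  fixes h u Y :: "'a::{ordered_real_vector,lattice_ab_group_add_abs}"
  assumes h0: "0 \<le> h" and u0: "0 \<le> u" and Y0: "0 \<le> Y" and j0: "0 \<le> j"
    and h_le: "h \<le> sup (Y - j *\<^sub>R u) 0"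
  shows "j *\<^sub>R inf h u \<le> Y"
proof -
  define a where "a = Y - j *\<^sub>R u"
  define t where "t = inf h u"
  define n where "n = sup (- a) 0"
  have t0: "0 \<le> t" and n0: "0 \<le> n" unfolding t_def n_def using h0 u0 by simp_all
  have "inf t n \<le> inf (sup a 0) n"
    unfolding t_def a_def using h_le by (meson inf_mono order_refl le_infI1)
  then have "inf t n = 0"
    using inf_pos_part_neg_part[of a] t0 n0 unfolding n_def by (simp add: antisym)
  then have disj: "inf (j *\<^sub>R t) n = 0" using inf_scaleR_eq_0[OF t0 n0 _ j0] by simp
  have "j *\<^sub>R t \<le> j *\<^sub>R u" unfolding t_def using j0 by (intro scaleR_left_mono) auto
  also have "\<dots> = Y - (sup a 0 - n)"
    unfolding n_def a_def using prts[of "Y - j *\<^sub>R u"] by (simp add: pprt_def nprt_def neg_sup_eq_inf)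
  also have "\<dots> \<le> Y + n" by (simp add: algebra_simps)
  finally have "j *\<^sub>R t = inf (j *\<^sub>R t) (Y + n)" by (simp add: inf_absorb1)
  also have "\<dots> \<le> inf (j *\<^sub>R t) Y + inf (j *\<^sub>R t) n"
    using t0 Y0 n0 j0 by (intro inf_add_le_add_inf) (auto simp: scaleR_nonneg_nonneg)
  also have "\<dots> \<le> Y" using disj by simp
  finally show ?thesis unfolding t_def .
qed

lemma le_sup_diff_scaleR:
  fixes g u v w :: "'a::{ordered_real_vector,lattice_ab_group_add_abs}"
  assumes g0: "0 \<le> g" and g_le: "g \<le> sup (v - w) 0" and w_le: "w \<le> u" and k0: "0 \<le> k"
  shows "w \<le> sup (v - g) (u - k *\<^sub>R g)"
proof -
  define a where "a = v - w"
  have "inf g (sup (- a) 0) \<le> inf (sup a 0) (sup (- a) 0)"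
    using g_le unfolding a_def by (meson inf_mono order_refl)
  then have "inf g (sup (- a) 0) = 0"
    using inf_pos_part_neg_part[of a] g0 by (simp add: antisym)
  then have disj: "inf (k *\<^sub>R g) (sup (- a) 0) = 0"
    by (rule inf_scaleR_eq_0[OF g0 sup_ge2 _ k0])
  have "g - a \<le> sup a 0 - a"
    using g_le unfolding a_def by (rule diff_right_mono)
  also have "sup a 0 - a = sup (- a) 0"
    by (simp only: diff_conv_add_uminus add_sup_distrib_right) (simp add: sup_commute)
  finally have "g - a \<le> sup (- a) 0" .
  moreover have "k *\<^sub>R g - (u - w) \<le> k *\<^sub>R g" using w_le by simp
  ultimately have "inf (g - a) (k *\<^sub>R g - (u - w)) \<le> inf (sup (- a) 0) (k *\<^sub>R g)"
    by (rule inf_mono)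
  also have "\<dots> = 0" using disj by (simp add: inf_commute)
  finally have "0 \<le> - inf (g - a) (k *\<^sub>R g - (u - w))"
    by (simp only: neg_0_le_iff_le)
  also have "\<dots> = sup (a - g) ((u - w) - k *\<^sub>R g)"
    by (simp only: neg_inf_eq_sup minus_diff_eq)
  also have "\<dots> = sup ((v - g) - w) ((u - k *\<^sub>R g) - w)"
    unfolding a_def by (simp add: algebra_simps)
  also have "\<dots> = sup (v - g) (u - k *\<^sub>R g) - w"
    by (metis diff_conv_add_uminus add_sup_distrib_right)
  finally show ?thesis by simp
qed

lemma archimedean_le_zero_of_inf_le:
  fixes g c :: "'a::{ordered_real_vector,lattice_ab_group_add_abs}"
  assumes arch: "archimedean_vl (UNIV :: 'a set)" and g0: "0 \<le> g"
    and inf_le: "\<And>k::nat. inf g (real k *\<^sub>R g - c) \<le> 0"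
  shows "g \<le> 0"
proof -
  have bound: "real k *\<^sub>R g - c \<le> sup g (- c)" for k
  proof (induction k)
    case (Suc k)
    have "real (Suc k) *\<^sub>R g - c = sup g (real k *\<^sub>R g - c) + inf g (real k *\<^sub>R g - c)"
      using add_eq_inf_sup[of g "real k *\<^sub>R g - c"] by (simp add: algebra_simps)
    also have "\<dots> \<le> sup g (real k *\<^sub>R g - c)" using inf_le[of k] by simp
    also have "\<dots> \<le> sup g (- c)" using Suc by (simp add: le_supI2)
    finally show ?case .
  qed simp
  have "real k *\<^sub>R g \<le> g + sup (- c) 0 + c" for k
  proof -
    have "real k *\<^sub>R g \<le> sup g (- c) + c" using bound[of k] by (simp add: diff_le_eq)
    also have "\<dots> \<le> g + sup (- c) 0 + c"
      using g0 by (intro add_right_mono) (simp add: add_increasing)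
    finally show ?thesis .
  qed
  then show ?thesis using arch unfolding archimedean_vl_def by blast
qed

section \<open>Sublattices, ideals and regular sublattices\<close>

lemma vector_sublattice_zero: "vector_sublattice F \<Longrightarrow> 0 \<in> F"
  unfolding vector_sublattice_def by blast

lemma vector_sublattice_add: "vector_sublattice F \<Longrightarrow> x \<in> F \<Longrightarrow> y \<in> F \<Longrightarrow> x + y \<in> F"
  unfolding vector_sublattice_def by blast

lemma vector_sublattice_scaleR: "vector_sublattice F \<Longrightarrow> x \<in> F \<Longrightarrow> c *\<^sub>R x \<in> F"
  unfolding vector_sublattice_def by blast

lemma vector_sublattice_sup: "vector_sublattice F \<Longrightarrow> x \<in> F \<Longrightarrow> y \<in> F \<Longrightarrow> sup x y \<in> F"
  unfolding vector_sublattice_def by blast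

lemma vector_sublattice_inf: "vector_sublattice F \<Longrightarrow> x \<in> F \<Longrightarrow> y \<in> F \<Longrightarrow> inf x y \<in> F"
  unfolding vector_sublattice_def by blast

lemma vector_sublattice_diff: "vector_sublattice F \<Longrightarrow> x \<in> F \<Longrightarrow> y \<in> F \<Longrightarrow> x - y \<in> F"
  by (metis vector_sublattice_add vector_sublattice_scaleR scaleR_minus1_left diff_conv_add_uminus)

lemma vector_sublattice_abs: "vector_sublattice F \<Longrightarrow> x \<in> F \<Longrightarrow> \<bar>x\<bar> \<in> F"
  by (metis vector_sublattice_sup vector_sublattice_scaleR scaleR_minus1_left abs_lattice)

lemma regular_sublattice_imp_vector_sublattice: "regular_sublattice F \<Longrightarrow> vector_sublattice F"
  unfolding regular_sublattice_def by blast

lemma regular_sublatticeD: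
  fixes A :: "'a::{ordered_real_vector,lattice_ab_group_add_abs} set" and xs :: "'a \<Rightarrow> 'a"
  shows "regular_sublattice F \<Longrightarrow> directed_set A le \<Longrightarrow> \<forall>a\<in>A. xs a \<in> F \<Longrightarrow> x \<in> F
    \<Longrightarrow> order_conv_in F A le xs x \<Longrightarrow> order_conv_in UNIV A le xs x"
  unfolding regular_sublattice_def by (elim conjE allE impE) auto

lemma ideal_in_zero: "ideal_in I \<Longrightarrow> 0 \<in> I"
  unfolding ideal_in_def by blast

lemma ideal_in_diff: "ideal_in I \<Longrightarrow> x \<in> I \<Longrightarrow> y \<in> I \<Longrightarrow> x - y \<in> I"
  unfolding ideal_in_def by (metis scaleR_minus1_left diff_conv_add_uminus)

lemma ideal_in_solid: "ideal_in I \<Longrightarrow> y \<in> I \<Longrightarrow> \<bar>x\<bar> \<le> \<bar>y\<bar> \<Longrightarrow> x \<in> I"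
  unfolding ideal_in_def solid_in_def by blast

lemma ideal_in_Inter:
  assumes "\<And>I. I \<in> \<I> \<Longrightarrow> ideal_in I"
  shows "ideal_in (\<Inter>\<I>)"
  unfolding ideal_in_def solid_in_def
proof (intro conjI ballI allI impI subsetI)
  show "0 \<in> \<Inter>\<I>" using assms unfolding ideal_in_def by blast
next
  fix x y assume "x \<in> \<Inter>\<I>" "y \<in> \<Inter>\<I>"
  then show "x + y \<in> \<Inter>\<I>" using assms unfolding ideal_in_def by blast
next
  fix c x assume "x \<in> \<Inter>\<I>"
  then show "c *\<^sub>R x \<in> \<Inter>\<I>" using assms unfolding ideal_in_def by blast
next
  fix x y assume "x \<in> \<Inter>\<I>" "\<bar>y\<bar> \<le> \<bar>x\<bar>"
  then show "y \<in> \<Inter>\<I>" using assms unfolding ideal_in_def solid_in_def by blast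
qed auto

lemma ideal_in_band_gen: "ideal_in (band_gen x)"
  unfolding band_gen_def by (rule ideal_in_Inter) (simp add: band_def)
lemma mem_band_gen_self: "x \<in> band_gen x"
  unfolding band_gen_def by blast

lemma band_gen_interval:
  fixes u :: "'a::{ordered_real_vector,lattice_ab_group_add_abs}"
  assumes "0 \<le> a" "a \<le> u"
  shows "a \<in> band_gen u"
proof -
  have "0 \<le> u" using assms by (rule order_trans)
  then show ?thesis
    using assms ideal_in_solid[OF ideal_in_band_gen mem_band_gen_self, of a u] by simp
qed

lemma order_conv_in_UNIV_lower_bound:
  fixes xs :: "'i \<Rightarrow> 'a::{ordered_real_vector,lattice_ab_group_add_abs}"
  assumes "directed_set A le" "order_conv_in UNIV A le xs 0" and lower: "\<forall>a\<in>A. e \<le> xs a"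
  shows "e \<le> 0"
proof -
  obtain B :: "'a set" and le' y
    where inf_y: "\<forall>z\<in>UNIV. (\<forall>b\<in>B. z \<le> y b) \<longrightarrow> z \<le> 0"
      and dom: "\<forall>b0\<in>B. \<exists>a0\<in>A. \<forall>a\<in>A. le a0 a \<longrightarrow> \<bar>xs a - 0\<bar> \<le> y b0"
    using assms(2) unfolding order_conv_in_def by blast
  have "e \<le> y b" if b: "b \<in> B" for b
  proof -
    obtain a0 where "a0 \<in> A" "\<forall>a\<in>A. le a0 a \<longrightarrow> \<bar>xs a\<bar> \<le> y b" using dom b by auto
    moreover have "le a0 a0" using assms(1) \<open>a0 \<in> A\<close> unfolding directed_set_def by blast
    ultimately have "\<bar>xs a0\<bar> \<le> y b" by blast
    then show ?thesis using lower \<open>a0 \<in> A\<close> by (meson abs_ge_self order_trans)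
  qed
  then show ?thesis using inf_y by blast
qed

lemma regular_sublattice_inf_zero:
  fixes P :: "'a::{ordered_real_vector,lattice_ab_group_add_abs} set"
  assumes reg: "regular_sublattice F" and "P \<subseteq> F" "P \<noteq> {}"
    and pos: "\<forall>p\<in>P. 0 \<le> p"
    and down: "\<forall>p1\<in>P. \<forall>p2\<in>P. \<exists>p3\<in>P. p3 \<le> p1 \<and> p3 \<le> p2"
    and inf_F: "\<forall>g\<in>F. (\<forall>p\<in>P. g \<le> p) \<longrightarrow> g \<le> 0"
    and lower: "\<forall>p\<in>P. e \<le> p"
  shows "e \<le> 0"
proof -
  let ?ge = "\<lambda>a b::'a. b \<le> a"
  have dir: "directed_set P ?ge"
    unfolding directed_set_def using assms(3) down by (auto intro: order_trans)
  have oc: "order_conv_in F P ?ge (\<lambda>a. a) 0"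
    unfolding order_conv_in_def
    by (rule exI[of _ P], rule exI[of _ ?ge], rule exI[of _ "\<lambda>a. a"])
      (use dir assms(2) pos inf_F in auto)
  have "0 \<in> F"
    using reg by (simp add: regular_sublattice_imp_vector_sublattice vector_sublattice_zero)
  then have "order_conv_in UNIV P ?ge (\<lambda>a. a) 0"
    by (rule regular_sublatticeD[OF reg dir _ _ oc, rotated]) (use assms(2) in blast)
  then show ?thesis
    using dir lower by (intro order_conv_in_UNIV_lower_bound)
qed

lemma vector_sublattice_inf_pos_part_diff:
  fixes W :: "'a::{ordered_real_vector,lattice_ab_group_add_abs} set"
  assumes arch: "archimedean_vl (UNIV :: 'a set)" and vs: "vector_sublattice F"
    and "u \<in> F" and bounded: "\<forall>w\<in>W. w \<le> u"
    and "v \<in> F" and least: "\<forall>d\<in>F. (\<forall>w\<in>W. w \<le> d) \<longrightarrow> v \<le> d"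
    and "g \<in> F" and g_le: "\<forall>w\<in>W. g \<le> sup (v - w) 0"
  shows "g \<le> 0"
proof -
  define g' where "g' = sup g 0"
  have "g' \<le> 0"
  proof (rule archimedean_le_zero_of_inf_le[OF arch, where c = "u - v"])
    fix k :: nat
    let ?d = "sup (v - g') (u - real k *\<^sub>R g')"
    have "g' \<in> F"
      using vs \<open>g \<in> F\<close> unfolding g'_def by (simp add: vector_sublattice_sup vector_sublattice_zero)
    then have "?d \<in> F" using vs \<open>u \<in> F\<close> \<open>v \<in> F\<close>
      by (simp add: vector_sublattice_sup vector_sublattice_diff vector_sublattice_scaleR)
    moreover have "w \<le> ?d" if "w \<in> W" for w
    proof (rule le_sup_diff_scaleR)
      show "g' \<le> sup (v - w) 0" using g_le that unfolding g'_def by auto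
    qed (use bounded that in \<open>auto simp: g'_def\<close>)
    ultimately have "v \<le> ?d" using least by blast
    then have "0 \<le> ?d - v" by simp
    also have "?d - v = sup ((v - g') - v) ((u - real k *\<^sub>R g') - v)"
      by (metis diff_conv_add_uminus add_sup_distrib_right)
    also have "\<dots> = sup (- g') ((u - v) - real k *\<^sub>R g')"
      by (simp add: algebra_simps)
    also have "\<dots> = - inf g' (real k *\<^sub>R g' - (u - v))"
      by (simp only: neg_inf_eq_sup minus_diff_eq)
    finally show "inf g' (real k *\<^sub>R g' - (u - v)) \<le> 0"
      by (simp only: neg_0_le_iff_le)
  qed (simp add: g'_def)
  then show ?thesis by (simp add: g'_def)
qed

text \<open>Suprema in \<open>F\<close> of bounded directed sets are suprema in \<open>E\<close>: the archimedean property
  makes the infimum of the \<open>(v - w)\<^sup>+\<close> zero in \<open>F\<close>, and regularity transfers this to \<open>E\<close>.\<close>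
lemma regular_sublattice_sup_le:
  fixes W :: "'a::{ordered_real_vector,lattice_ab_group_add_abs} set"
  assumes arch: "archimedean_vl (UNIV :: 'a set)" and reg: "regular_sublattice F"
    and "W \<subseteq> F" "W \<noteq> {}"
    and up: "\<forall>w1\<in>W. \<forall>w2\<in>W. \<exists>w3\<in>W. w1 \<le> w3 \<and> w2 \<le> w3"
    and "u \<in> F" and bounded: "\<forall>w\<in>W. w \<le> u"
    and "v \<in> F" and least: "\<forall>d\<in>F. (\<forall>w\<in>W. w \<le> d) \<longrightarrow> v \<le> d"
    and upper: "\<forall>w\<in>W. w \<le> s"
  shows "v \<le> s"
proof -
  have vs: "vector_sublattice F" using reg by (rule regular_sublattice_imp_vector_sublattice)
  define P where "P = (\<lambda>w. sup (v - w) 0) ` W"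
  have inf_F: "g \<le> 0" if "g \<in> F" and "\<forall>p\<in>P. g \<le> p" for g
    using vector_sublattice_inf_pos_part_diff[OF arch vs \<open>u \<in> F\<close> bounded \<open>v \<in> F\<close> least \<open>g \<in> F\<close>]
      that(2) unfolding P_def by blast
  have down: "\<forall>p1\<in>P. \<forall>p2\<in>P. \<exists>p3\<in>P. p3 \<le> p1 \<and> p3 \<le> p2"
  proof (intro ballI)
    fix p1 p2 assume "p1 \<in> P" "p2 \<in> P"
    then obtain w1 w2 where w: "w1 \<in> W" "w2 \<in> W" "p1 = sup (v - w1) 0" "p2 = sup (v - w2) 0"
      unfolding P_def by auto
    then obtain w3 where "w3 \<in> W" "w1 \<le> w3" "w2 \<le> w3" using up by blast
    then show "\<exists>p3\<in>P. p3 \<le> p1 \<and> p3 \<le> p2" unfolding P_def using w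
      by (intro bexI[of _ "sup (v - w3) 0"]) (auto intro!: le_supI intro: le_supI1 diff_left_mono)
  qed
  have "sup (v - s) 0 \<le> 0"
  proof (rule regular_sublattice_inf_zero[OF reg _ _ _ down])
    show "P \<subseteq> F" unfolding P_def using \<open>W \<subseteq> F\<close> \<open>v \<in> F\<close> vs
      by (blast intro: vector_sublattice_sup vector_sublattice_diff vector_sublattice_zero)
    show "P \<noteq> {}" "\<forall>p\<in>P. 0 \<le> p" unfolding P_def using \<open>W \<noteq> {}\<close> by auto
    show "\<forall>g\<in>F. (\<forall>p\<in>P. g \<le> p) \<longrightarrow> g \<le> 0" using inf_F by blast
    show "\<forall>p\<in>P. sup (v - s) 0 \<le> p" unfolding P_def
      using upper by (auto intro!: le_supI intro: le_supI1 diff_left_mono)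
  qed
  then show ?thesis by simp
qed

section \<open>Solid neighbourhood bases of linear topologies\<close>

lemma net_tendstoD:
  "net_tendsto T A le xs x \<Longrightarrow> openin T U \<Longrightarrow> x \<in> U \<Longrightarrow> \<exists>a0\<in>A. \<forall>a\<in>A. le a0 a \<longrightarrow> xs a \<in> U"
  unfolding net_tendsto_def by blast

lemma linear_topology_scaleR:
  assumes "linear_topology_on S T" "x \<in> S"
  shows "c *\<^sub>R x \<in> S"
proof -
  have ts: "topspace T = S"
    and "continuous_map (prod_topology euclideanreal T) T (\<lambda>(c, x). c *\<^sub>R x)"
    using assms(1) unfolding linear_topology_on_def by auto
  then have "(\<lambda>(c, x). c *\<^sub>R x) ` topspace (prod_topology euclideanreal T) \<subseteq> S"
    by (metis continuous_map_image_subset_topspace)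
  moreover have "(c, x) \<in> topspace (prod_topology euclideanreal T)"
    using assms(2) ts by simp
  ultimately show ?thesis by blast
qed

lemma linear_topology_openin_translate:
  assumes lt: "linear_topology_on S T" and "l \<in> S" and "openin T Q"
  shows "openin T {a \<in> S. a - l \<in> Q}"
proof -
  have ts: "topspace T = S" and add: "continuous_map (prod_topology T T) T (\<lambda>(x, y). x + y)"
    using lt unfolding linear_topology_on_def by auto
  have "- l \<in> S" using linear_topology_scaleR[OF lt \<open>l \<in> S\<close>, of "-1"] by simp
  then have "continuous_map T (prod_topology T T) (\<lambda>a. (a, - l))"
    using ts by (intro continuous_map_pairedI) (auto simp: continuous_map_const)
  then have "continuous_map T T ((\<lambda>(x, y). x + y) \<circ> (\<lambda>a. (a, - l)))"
    using add by (rule continuous_map_compose)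
  from openin_continuous_map_preimage[OF this \<open>openin T Q\<close>] show ?thesis
    using ts by simp
qed

lemma linear_topology_half_nhd:
  assumes lt: "linear_topology_on S T" and "openin T Q" "0 \<in> Q"
  shows "\<exists>W. openin T W \<and> 0 \<in> W \<and> (\<forall>a\<in>W. \<forall>b\<in>W. a + b \<in> Q)"
proof -
  define R where "R = {p \<in> topspace (prod_topology T T). (\<lambda>(x, y). x + y) p \<in> Q}"
  have "continuous_map (prod_topology T T) T (\<lambda>(x, y). x + y)"
    using lt unfolding linear_topology_on_def by auto
  then have "openin (prod_topology T T) R"
    unfolding R_def using \<open>openin T Q\<close> by (rule openin_continuous_map_preimage)
  moreover have "0 \<in> topspace T" using assms(2,3) openin_subset by blast
  then have "(0, 0) \<in> R" unfolding R_def using assms(3) by simp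
  ultimately have "\<exists>U V. openin T U \<and> openin T V \<and> 0 \<in> U \<and> 0 \<in> V \<and> U \<times> V \<subseteq> R"
    unfolding openin_prod_topology_alt by (elim allE impE)
  then obtain U V where UV: "openin T U" "openin T V" "0 \<in> U" "0 \<in> V" "U \<times> V \<subseteq> R"
    by (elim exE conjE)
  show ?thesis
  proof (intro exI conjI ballI)
    show "openin T (U \<inter> V)" using UV(1,2) by (rule openin_Int)
    show "0 \<in> U \<inter> V" using UV by blast
    fix a b assume "a \<in> U \<inter> V" "b \<in> U \<inter> V"
    then have "(a, b) \<in> R" using UV(5) by blast
    then show "a + b \<in> Q" unfolding R_def by simp
  qed
qed

definition solid_base_seq :: "'a::{ordered_real_vector,lattice_ab_group_add_abs} topology \<Rightarrow>
    'a set \<Rightarrow> (nat \<Rightarrow> 'a set) \<Rightarrow> bool" where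
  "solid_base_seq T S U \<longleftrightarrow> (\<forall>j. solid_in S (U j)) \<and> (\<forall>j. \<exists>W. openin T W \<and> 0 \<in> W \<and> W \<subseteq> U j)
     \<and> (\<forall>j. \<forall>a\<in>U (Suc j). \<forall>b\<in>U (Suc j). a + b \<in> U j)
     \<and> (\<forall>Q. openin T Q \<and> 0 \<in> Q \<longrightarrow> (\<exists>j. U j \<subseteq> Q))"

lemma solid_base_seq_nhd: "solid_base_seq T S U \<Longrightarrow> \<exists>W. openin T W \<and> 0 \<in> W \<and> W \<subseteq> U j"
  unfolding solid_base_seq_def by blast

lemma solid_base_seq_small: "solid_base_seq T S U \<Longrightarrow> openin T Q \<Longrightarrow> 0 \<in> Q \<Longrightarrow> \<exists>j. U j \<subseteq> Q"
  unfolding solid_base_seq_def by blast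

lemma solid_base_seq_add: "solid_base_seq T S U \<Longrightarrow> a \<in> U (Suc j) \<Longrightarrow> b \<in> U (Suc j) \<Longrightarrow> a + b \<in> U j"
  unfolding solid_base_seq_def by blast

lemma solid_base_seq_zero: "solid_base_seq T S U \<Longrightarrow> 0 \<in> U j"
  using solid_base_seq_nhd by blast

lemma solid_base_seq_solid:
  "solid_base_seq T S U \<Longrightarrow> ideal_in S \<Longrightarrow> a \<in> U j \<Longrightarrow> \<bar>b\<bar> \<le> \<bar>a\<bar> \<Longrightarrow> b \<in> U j"
  unfolding solid_base_seq_def solid_in_def by (meson ideal_in_solid subsetD)

lemma solid_base_seq_antimono:
  assumes "solid_base_seq T S U" "i \<le> j"
  shows "U j \<subseteq> U i"
  using assms(2)
proof (induction j rule: dec_induct)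
  case (step j)
  have "U (Suc j) \<subseteq> U j"
    using solid_base_seq_add[OF assms(1) _ solid_base_seq_zero[OF assms(1)]] by fastforce
  with step.IH show ?case by blast
qed simp

lemma solid_base_seq_Inter_zero:
  assumes uq: "solid_base_seq T S U" and lt: "linear_topology_on S T"
    and "p \<in> S" and p: "\<And>j. p \<in> U j"
  shows "p = 0"
proof (rule ccontr)
  assume "p \<noteq> 0"
  have "Hausdorff_space T" "topspace T = S" using lt unfolding linear_topology_on_def by auto
  moreover have "0 \<in> S" using linear_topology_scaleR[OF lt \<open>p \<in> S\<close>, of 0] by simp
  ultimately have "\<exists>Q1 Q2. openin T Q1 \<and> openin T Q2 \<and> 0 \<in> Q1 \<and> p \<in> Q2 \<and> disjnt Q1 Q2"
    using \<open>p \<in> S\<close> \<open>p \<noteq> 0\<close> unfolding Hausdorff_space_def by (metis (no_types))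
  then obtain Q1 Q2 where Q: "openin T Q1" "0 \<in> Q1" "p \<in> Q2" "disjnt Q1 Q2"
    by blast
  obtain j where "U j \<subseteq> Q1" using solid_base_seq_small[OF uq Q(1,2)] by blast
  then show False using p[of j] Q(3,4) by (auto simp: disjnt_def)
qed

lemma solid_base_seq_sum:
  assumes uq: "solid_base_seq T S U" and v: "\<And>k. v k \<in> U (Suc k)"
  shows "(\<Sum>i<m. v (k + i)) \<in> U k"
proof (induction m arbitrary: k)
  case (Suc m)
  have "(\<Sum>i<Suc m. v (k + i)) = v k + (\<Sum>i<m. v (Suc k + i))"
    by (subst sum.lessThan_Suc_shift) simp
  then show ?case using solid_base_seq_add[OF uq v Suc.IH] by simp
qed (simp add: solid_base_seq_zero[OF uq])

lemma solid_base_seq_tendsto: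
  assumes uq: "solid_base_seq T S U" and lt: "linear_topology_on S T"
    and lim: "net_tendsto T UNIV (\<le>) (s :: nat \<Rightarrow> 'a::{ordered_real_vector,lattice_ab_group_add_abs}) l"
  shows "\<exists>N. \<forall>m\<ge>N. s m - l \<in> U j"
proof -
  obtain W where W: "openin T W" "0 \<in> W" "W \<subseteq> U j" using solid_base_seq_nhd[OF uq] by blast
  have "l \<in> S" using lim lt unfolding net_tendsto_def linear_topology_on_def by auto
  then have "openin T {a \<in> S. a - l \<in> W}" "l \<in> {a \<in> S. a - l \<in> W}"
    using linear_topology_openin_translate[OF lt _ W(1)] W(2) by auto
  from net_tendstoD[OF lim this] obtain N where "\<forall>m. N \<le> m \<longrightarrow> s m \<in> {a \<in> S. a - l \<in> W}"
    by blast
  then show ?thesis using W(3) by blast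
qed

text \<open>Closedness of the positive cone: \<open>(l - a) \<and> 0\<close> is dominated by \<open>|s m - l|\<close> once \<open>a \<le> s m\<close>.\<close>
lemma solid_base_seq_limit_ge:
  fixes s :: "nat \<Rightarrow> 'a::{ordered_real_vector,lattice_ab_group_add_abs}"
  assumes uq: "solid_base_seq T S U" and lt: "linear_topology_on S T" and S: "ideal_in S"
    and lim: "net_tendsto T UNIV (\<le>) s l" and "a \<in> S" and ge: "\<forall>m\<ge>N. a \<le> s m"
  shows "a \<le> l"
proof -
  define D where "D = inf (l - a) 0"
  have "l \<in> S" using lim lt unfolding net_tendsto_def linear_topology_on_def by auto
  have "D \<in> U j" for j
  proof -
    obtain M where M: "\<forall>m\<ge>M. s m - l \<in> U j" using solid_base_seq_tendsto[OF uq lt lim] by blast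
    define m where "m = max M N"
    have "inf (s m - a) 0 = 0" using ge unfolding m_def by (simp add: inf_absorb2)
    then have "\<bar>D\<bar> = \<bar>inf (l - a) 0 - inf (s m - a) 0\<bar>" unfolding D_def by simp
    also have "\<dots> \<le> \<bar>(l - a) - (s m - a)\<bar>" by (rule abs_inf_diff_inf_le)
    also have "\<dots> = \<bar>s m - l\<bar>" by (simp add: abs_minus_commute)
    finally have "\<bar>D\<bar> \<le> \<bar>s m - l\<bar>" .
    moreover have "s m - l \<in> U j" using M unfolding m_def by simp
    ultimately show ?thesis using solid_base_seq_solid[OF uq S] by blast
  qed
  moreover have "D \<in> S"
    using ideal_in_solid[OF S ideal_in_diff[OF S \<open>l \<in> S\<close> \<open>a \<in> S\<close>]]
      abs_inf_diff_inf_le[of "l - a" 0 0] unfolding D_def by simp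
  ultimately have "D = 0" using solid_base_seq_Inter_zero[OF uq lt] by blast
  then show ?thesis unfolding D_def by (metis inf.cobounded1 diff_ge_0_iff_ge)
qed

lemma solid_base_seqI:
  assumes "\<And>j. solid_in S (V j)" and "\<And>j. openin T (W j)" "\<And>j. 0 \<in> W j" "\<And>j. W j \<subseteq> V j"
    and "\<And>j a b. a \<in> V (Suc j) \<Longrightarrow> b \<in> V (Suc j) \<Longrightarrow> a + b \<in> W j"
    and "\<And>Q. openin T Q \<Longrightarrow> 0 \<in> Q \<Longrightarrow> \<exists>j. V j \<subseteq> Q"
  shows "solid_base_seq T S V"
  unfolding solid_base_seq_def
proof (intro conjI allI ballI impI)
  show "solid_in S (V j)" for j by fact
  show "\<exists>W'. openin T W' \<and> 0 \<in> W' \<and> W' \<subseteq> V j" for j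
    using assms(2-4) by blast
  show "a + b \<in> V j" if "a \<in> V (Suc j)" "b \<in> V (Suc j)" for j a b
    using assms(4)[of j] assms(5)[OF that] by blast
  show "\<exists>j. V j \<subseteq> Q" if "openin T Q \<and> 0 \<in> Q" for Q
    using assms(6) that by blast
qed

lemma first_countable_nhds_sequence:
  fixes T :: "'a topology"
  assumes "first_countable T" "x \<in> topspace T"
  obtains b :: "nat \<Rightarrow> 'a set" where "\<And>j. openin T (b j) \<and> x \<in> b j"
    and "\<And>Q. openin T Q \<Longrightarrow> x \<in> Q \<Longrightarrow> \<exists>j. b j \<subseteq> Q"
proof -
  have "\<exists>B. countable B \<and> (\<forall>V\<in>B. openin T V)
      \<and> (\<forall>U. openin T U \<and> x \<in> U \<longrightarrow> (\<exists>V\<in>B. x \<in> V \<and> V \<subseteq> U))"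
    using assms unfolding first_countable_def by blast
  then obtain B where "countable B" and B_open: "\<forall>V\<in>B. openin T V"
    and B_base: "\<forall>U. openin T U \<and> x \<in> U \<longrightarrow> (\<exists>V\<in>B. x \<in> V \<and> V \<subseteq> U)"
    by blast
  define B0 where "B0 = {V\<in>B. x \<in> V}"
  have "countable B0" unfolding B0_def using \<open>countable B\<close> by simp
  have "B0 \<noteq> {}" unfolding B0_def using B_base[rule_format, of "topspace T"] assms(2) by auto
  show ?thesis
  proof (rule that[of "from_nat_into B0"])
    show "openin T (from_nat_into B0 j) \<and> x \<in> from_nat_into B0 j" for j
      using from_nat_into[OF \<open>B0 \<noteq> {}\<close>, of j] B_open unfolding B0_def by blast
    show "\<exists>j. from_nat_into B0 j \<subseteq> Q" if Q: "openin T Q" "x \<in> Q" for Q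
    proof -
      obtain V where "V \<in> B0" "V \<subseteq> Q" using B_base Q unfolding B0_def by blast
      moreover obtain j where "from_nat_into B0 j = V"
        using from_nat_into_surj[OF \<open>countable B0\<close> \<open>V \<in> B0\<close>] by blast
      ultimately show ?thesis by blast
    qed
  qed
qed

lemma solid_base_seq_exists:
  fixes T :: "'a::{ordered_real_vector,lattice_ab_group_add_abs} topology"
  assumes ls: "locally_solid_on S T" and fc: "first_countable T" and "0 \<in> S"
  shows "\<exists>U. solid_base_seq T S U"
proof -
  have lt: "linear_topology_on S T" using ls unfolding locally_solid_on_def by blast
  then have ts: "topspace T = S" unfolding linear_topology_on_def by blast
  have "0 \<in> topspace T" using \<open>0 \<in> S\<close> ts by simp
  then obtain b :: "nat \<Rightarrow> 'a set" where b: "\<And>j. openin T (b j) \<and> 0 \<in> b j"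
    and b_base: "\<And>Q. openin T Q \<Longrightarrow> 0 \<in> Q \<Longrightarrow> \<exists>j. b j \<subseteq> Q"
    using first_countable_nhds_sequence[OF fc] by blast
  define good where "good = (\<lambda>Q (p :: 'a set \<times> 'a set). solid_in S (fst p) \<and> openin T (snd p)
      \<and> 0 \<in> snd p \<and> snd p \<subseteq> fst p \<and> fst p \<subseteq> Q)"
  define pick where "pick = (\<lambda>Q. SOME p. good Q p)"
  have pick: "good Q (pick Q)" if Q: "openin T Q" "0 \<in> Q" for Q
  proof -
    obtain V W where "solid_in S V \<and> openin T W \<and> 0 \<in> W \<and> W \<subseteq> V \<and> V \<subseteq> Q"
      using ls Q unfolding locally_solid_on_def by blast
    then have "good Q (V, W)" unfolding good_def by simp
    then show ?thesis unfolding pick_def by (rule someI)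
  qed
  define half where "half = (\<lambda>Q. SOME W. openin T W \<and> 0 \<in> W \<and> (\<forall>a\<in>W. \<forall>b\<in>W. a + b \<in> Q))"
  have half: "openin T (half Q) \<and> 0 \<in> half Q \<and> (\<forall>a\<in>half Q. \<forall>b\<in>half Q. a + b \<in> Q)"
    if "openin T Q" "0 \<in> Q" for Q
    unfolding half_def using linear_topology_half_nhd[OF lt that] by (rule someI_ex)
  \<comment> \<open>the \<open>j\<close>-th neighbourhood lies in \<open>b j\<close> and in a half of the open core of the previous one\<close>
  define VW where "VW = rec_nat (pick (b 0)) (\<lambda>j p. pick (b (Suc j) \<inter> half (snd p)))"
  have VW: "good (b j) (VW j) \<and> (\<forall>i. j = Suc i \<longrightarrow> fst (VW j) \<subseteq> half (snd (VW i)))" for j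
  proof (induction j)
    case 0
    show ?case unfolding VW_def using pick b by simp
  next
    case (Suc j)
    then have "openin T (snd (VW j)) \<and> 0 \<in> snd (VW j)" unfolding good_def by simp
    then have "openin T (b (Suc j) \<inter> half (snd (VW j))) \<and> 0 \<in> b (Suc j) \<inter> half (snd (VW j))"
      using half b by blast
    then have "good (b (Suc j) \<inter> half (snd (VW j))) (VW (Suc j))"
      unfolding VW_def using pick by simp
    then show ?case unfolding good_def by auto
  qed
  have "solid_base_seq T S (\<lambda>j. fst (VW j))"
  proof (rule solid_base_seqI)
    show "solid_in S (fst (VW j))" "openin T (snd (VW j))" "0 \<in> snd (VW j)"
      "snd (VW j) \<subseteq> fst (VW j)" for j
      using VW[of j] unfolding good_def by blast+
    show "a + c \<in> snd (VW j)" if "a \<in> fst (VW (Suc j))" "c \<in> fst (VW (Suc j))" for j a c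
    proof -
      have "openin T (snd (VW j)) \<and> 0 \<in> snd (VW j)" using VW[of j] unfolding good_def by simp
      then show ?thesis using that half VW[of "Suc j"] by blast
    qed
    show "\<exists>j. fst (VW j) \<subseteq> Q" if "openin T Q" "0 \<in> Q" for Q
      using b_base[OF that] VW unfolding good_def by blast
  qed
  then show ?thesis by blast
qed

section \<open>Running maxima and order null sequences\<close>

primrec running_max :: "(nat \<Rightarrow> 'a::lattice) \<Rightarrow> nat \<Rightarrow> nat \<Rightarrow> 'a" where
  "running_max v n 0 = v n"
| "running_max v n (Suc m) = sup (running_max v n m) (v (n + Suc m))"

lemma running_max_ge: "i \<le> m \<Longrightarrow> v (n + i) \<le> running_max v n m"
  by (induction m) (auto simp: le_Suc_eq intro: le_supI1)

lemma running_max_le: "(\<And>i. i \<le> m \<Longrightarrow> v (n + i) \<le> s) \<Longrightarrow> running_max v n m \<le> s"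
proof (induction m)
  case (Suc m)
  then show ?case using Suc.prems[of "Suc m"] by simp
qed simp

lemma running_max_mono: "m \<le> m' \<Longrightarrow> running_max v n m \<le> running_max v n m'"
  by (induction m' rule: dec_induct) (auto intro: le_supI1)

lemma running_max_in_sublattice:
  "vector_sublattice F \<Longrightarrow> (\<And>k. v k \<in> F) \<Longrightarrow> running_max v n m \<in> F"
  by (induction m) (auto intro: vector_sublattice_sup)

lemma running_max_increment_le_sum:
  fixes v :: "nat \<Rightarrow> 'a::lattice_ab_group_add"
  assumes "\<And>k. 0 \<le> v k"
  shows "running_max v n (m + d) - running_max v n m \<le> (\<Sum>i<d. v (n + m + 1 + i))"
proof (induction d)
  case (Suc d)
  have "0 \<le> running_max v n (m + d)"
    using assms running_max_ge[of 0 "m + d" v n] by (metis add_0_right order_trans zero_le)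
  then have "running_max v n (m + Suc d) \<le> running_max v n (m + d) + v (n + m + 1 + d)"
    using assms sup_le_add_of_nonneg by (simp add: add.assoc)
  then have "running_max v n (m + Suc d) - running_max v n m
      \<le> (running_max v n (m + d) - running_max v n m) + v (n + m + 1 + d)"
    by (simp add: algebra_simps)
  also have "\<dots> \<le> (\<Sum>i<Suc d. v (n + m + 1 + i))" using Suc by simp
  finally show ?case .
qed simp

lemma running_max_increment_in_base:
  assumes uq: "solid_base_seq T S U" and S: "ideal_in S"
    and v0: "\<And>k. 0 \<le> v k" and vU: "\<And>k. v k \<in> U (Suc k)"
  shows "running_max v n (m + d) - running_max v n m \<in> U (n + m + 1)"
proof (rule solid_base_seq_solid[OF uq S])
  show "(\<Sum>i<d. v (n + m + 1 + i)) \<in> U (n + m + 1)" using solid_base_seq_sum[OF uq vU] .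
  have "0 \<le> running_max v n (m + d) - running_max v n m"
    using running_max_mono[of m "m + d"] by simp
  moreover have "running_max v n (m + d) - running_max v n m \<le> (\<Sum>i<d. v (n + m + 1 + i))"
    by (rule running_max_increment_le_sum[OF v0])
  ultimately show "\<bar>running_max v n (m + d) - running_max v n m\<bar> \<le> \<bar>\<Sum>i<d. v (n + m + 1 + i)\<bar>"
    by (simp add: order_trans[OF _ abs_ge_self])
qed

lemma running_max_in_base:
  assumes uq: "solid_base_seq T S U" and S: "ideal_in S"
    and v0: "\<And>k. 0 \<le> v k" and vU: "\<And>k. v k \<in> U (Suc k)"
  shows "running_max v n m \<in> U n"
proof -
  have "running_max v n (0 + m) - running_max v n 0 \<in> U (n + 0 + 1)"
    by (rule running_max_increment_in_base[OF assms])
  then have "v n + (running_max v n m - v n) \<in> U n"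
    by (intro solid_base_seq_add[OF uq vU[of n]]) simp
  then show ?thesis by simp
qed

lemma running_max_tvs_cauchy:
  assumes uq: "solid_base_seq T S U" and S: "ideal_in S"
    and v0: "\<And>k. 0 \<le> v k" and vU: "\<And>k. v k \<in> U (Suc k)"
  shows "tvs_cauchy T (running_max v n)"
  unfolding tvs_cauchy_def
proof (intro allI impI)
  fix Q assume "openin T Q \<and> 0 \<in> Q"
  then obtain j where j: "U j \<subseteq> Q" using solid_base_seq_small[OF uq] by blast
  have incr: "running_max v n q - running_max v n p \<in> U j" if "j \<le> p" "p \<le> q" for p q
  proof -
    have "running_max v n (p + (q - p)) - running_max v n p \<in> U (n + p + 1)"
      by (rule running_max_increment_in_base[OF assms])
    moreover have "U (n + p + 1) \<subseteq> U j" using solid_base_seq_antimono[OF uq] that by simp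
    moreover have "p + (q - p) = q" using that by simp
    ultimately show ?thesis by auto
  qed
  have "running_max v n q - running_max v n p \<in> U j" if "j \<le> p" "j \<le> q" for p q
  proof (cases "p \<le> q")
    case False
    then have "running_max v n p - running_max v n q \<in> U j" using incr that by simp
    then show ?thesis by (rule solid_base_seq_solid[OF uq S]) (simp add: abs_minus_commute)
  qed (rule incr[OF that(1)])
  then show "\<exists>N. \<forall>m\<ge>N. \<forall>n'\<ge>N. running_max v n n' - running_max v n m \<in> Q" using j by blast
qed

lemma running_max_limit_in_base:
  assumes lt: "linear_topology_on S T" and uq: "solid_base_seq T S U" and S: "ideal_in S"
    and v0: "\<And>k. 0 \<le> v k" and vU: "\<And>k. v k \<in> U (Suc k)"
    and lim: "net_tendsto T UNIV (\<le>) (running_max v (Suc k)) l"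
  shows "l \<in> U k"
proof -
  obtain N where "\<forall>m\<ge>N. running_max v (Suc k) m - l \<in> U (Suc k)"
    using solid_base_seq_tendsto[OF uq lt lim] by blast
  then have "running_max v (Suc k) N - l \<in> U (Suc k)" by simp
  then have "l - running_max v (Suc k) N \<in> U (Suc k)"
    by (rule solid_base_seq_solid[OF uq S]) (simp add: abs_minus_commute)
  then have "running_max v (Suc k) N + (l - running_max v (Suc k) N) \<in> U k"
    by (rule solid_base_seq_add[OF uq running_max_in_base[OF uq S v0 vU]])
  then show ?thesis by simp
qed

text \<open>The interval completeness of the band topology makes a sequence in \<open>[0, u]\<close> that
  converges fast enough order null: \<open>z n\<close> is the limit of the running maxima from \<open>n\<close> on.\<close>
lemma solid_base_seq_order_null:
  assumes lt: "linear_topology_on S T" and uq: "solid_base_seq T S U" and S: "ideal_in S"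
    and "u \<in> S"
    and complete: "\<forall>s. (\<forall>n. s n \<in> {0..u}) \<and> tvs_cauchy T s \<longrightarrow>
                        (\<exists>l\<in>{0..u}. net_tendsto T UNIV (\<le>) s l)"
    and v: "\<And>k. v k \<in> {0..u}" and vU: "\<And>k. v k \<in> U (Suc k)"
  shows "\<exists>z. (\<forall>n k. n \<le> k \<longrightarrow> v k \<le> z n) \<and> (\<forall>h. (\<forall>n. h \<le> z n) \<longrightarrow> h \<le> 0)"
proof -
  have v0: "0 \<le> v k" for k using v by simp
  have "0 \<le> u" using v[of 0] by auto
  have in_S: "a \<in> S" if "a \<in> {0..u}" for a
    using that \<open>0 \<le> u\<close> by (intro ideal_in_solid[OF S \<open>u \<in> S\<close>]) simp
  have "\<exists>l. l \<in> {0..u} \<and> net_tendsto T UNIV (\<le>) (running_max v n) l" for n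
  proof -
    have "running_max v n m \<in> {0..u}" for m
    proof -
      have "0 \<le> running_max v n m"
        using order_trans[OF v0[of n] running_max_ge[of 0 m v n, simplified]] by simp
      moreover have "running_max v n m \<le> u" using v by (intro running_max_le) simp
      ultimately show ?thesis by simp
    qed
    then show ?thesis using complete running_max_tvs_cauchy[OF uq S v0 vU] by blast
  qed
  then obtain z where "\<forall>n. z n \<in> {0..u} \<and> net_tendsto T UNIV (\<le>) (running_max v n) (z n)"
    by metis
  then have z: "\<And>n. z n \<in> {0..u}" and lim: "\<And>n. net_tendsto T UNIV (\<le>) (running_max v n) (z n)"
    by blast+
  have "v k \<le> z n" if "n \<le> k" for n k
  proof (rule solid_base_seq_limit_ge[OF uq lt S lim in_S[OF v]])
    show "\<forall>m\<ge>k - n. v k \<le> running_max v n m" using running_max_ge[of "k - n" _ v n] that by auto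
  qed
  moreover have "h \<le> 0" if h: "\<forall>n. h \<le> z n" for h
  proof -
    have z_small: "z (Suc k) \<in> U k" for k
      using running_max_limit_in_base[OF lt uq S v0 vU lim] .
    have h0: "0 \<le> sup h 0" and hz: "sup h 0 \<le> z n" for n
      using h z[of n] by auto
    have "sup h 0 \<in> U k" for k
      by (rule solid_base_seq_solid[OF uq S z_small]) (use h0 hz in simp)
    moreover have "sup h 0 \<in> S" using in_S h0 order_trans[OF hz[of 0]] z[of 0] by simp
    ultimately have "sup h 0 = 0" using solid_base_seq_Inter_zero[OF uq lt] by blast
    then show ?thesis by (metis sup.cobounded1)
  qed
  ultimately show ?thesis by blast
qed

section \<open>Unbounded order convergence of fast sequences\<close>

lemma inf_eq_zero_of_truncations_order_null:
  fixes e z :: "nat \<Rightarrow> 'a::{ordered_real_vector,lattice_ab_group_add_abs}"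
  assumes arch: "archimedean_vl (UNIV :: 'a set)" and u0: "0 \<le> u" and e0: "\<And>k. 0 \<le> e k"
    and dom: "\<And>n k. n \<le> k \<Longrightarrow> inf (e k) u \<le> z n" and null: "\<And>g. (\<forall>n. g \<le> z n) \<Longrightarrow> g \<le> 0"
    and h0: "0 \<le> h" and below: "\<And>s. eventually (\<lambda>k. inf (e k) \<bar>y\<bar> \<le> s) sequentially \<Longrightarrow> h \<le> s"
  shows "inf h u = 0"
proof -
  have excess: "h \<le> sup (\<bar>y\<bar> - r *\<^sub>R u) 0" if "1 \<le> r" for r
  proof -
    define c where "c = sup (\<bar>y\<bar> - r *\<^sub>R u) 0"
    have "inverse r *\<^sub>R (h - c) \<le> z m" for m
    proof -
      have "inf (e k) \<bar>y\<bar> \<le> c + r *\<^sub>R z m" if "m \<le> k" for k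
      proof -
        have "inf (e k) \<bar>y\<bar> \<le> inf (e k) (r *\<^sub>R u) + c"
          unfolding c_def using e0 u0 \<open>1 \<le> r\<close> by (intro inf_le_inf_add_excess) (auto simp: scaleR_nonneg_nonneg)
        also have "inf (e k) (r *\<^sub>R u) \<le> r *\<^sub>R inf (e k) u"
          using e0 \<open>1 \<le> r\<close> by (rule inf_scaleR_le_scaleR_inf)
        also have "\<dots> \<le> r *\<^sub>R z m"
          using dom[OF that] \<open>1 \<le> r\<close> by (intro scaleR_left_mono) auto
        finally show ?thesis by (simp add: add.commute)
      qed
      then have "h \<le> c + r *\<^sub>R z m" by (intro below) (auto simp: eventually_sequentially)
      then have "inverse r *\<^sub>R (h - c) \<le> inverse r *\<^sub>R (r *\<^sub>R z m)"
        using \<open>1 \<le> r\<close> by (intro scaleR_left_mono) (auto simp: diff_le_eq add.commute)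
      then show ?thesis using \<open>1 \<le> r\<close> by simp
    qed
    then have "inverse r *\<^sub>R (h - c) \<le> 0" using null by blast
    then have "r *\<^sub>R (inverse r *\<^sub>R (h - c)) \<le> r *\<^sub>R 0"
      using \<open>1 \<le> r\<close> by (intro scaleR_left_mono) auto
    then have "h - c \<le> 0" using \<open>1 \<le> r\<close> by simp
    then show ?thesis unfolding c_def by (simp only: diff_le_0_iff_le)
  qed
  have "real j *\<^sub>R inf h u \<le> \<bar>y\<bar>" for j
  proof (cases j)
    case (Suc i)
    show ?thesis
      using scaleR_inf_le_of_le_excess[OF h0 u0 abs_ge_zero _ excess[of "real j"]] Suc by simp
  qed simp
  then have "inf h u \<le> 0" using arch unfolding archimedean_vl_def by blast
  then show ?thesis using h0 u0 by (simp add: antisym)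
qed

text \<open>Since \<open>w k + h = w k \<or> h\<close>, every eventual upper bound \<open>s\<close> of \<open>w\<close> can be lowered to \<open>s - h\<close>;
  starting from \<open>Y\<close> this gives \<open>h \<le> Y - m h\<close> for all \<open>m\<close>.\<close>
lemma le_zero_of_disjoint_below_eventual_bounds:
  fixes w :: "nat \<Rightarrow> 'a::{ordered_real_vector,lattice_ab_group_add_abs}"
  assumes arch: "archimedean_vl (UNIV :: 'a set)" and wY: "\<And>k. w k \<le> Y"
    and disj: "\<And>k. inf h (w k) = 0"
    and below: "\<And>s. eventually (\<lambda>k. w k \<le> s) sequentially \<Longrightarrow> h \<le> s"
  shows "h \<le> 0"
proof -
  have lower: "eventually (\<lambda>k. w k \<le> s - h) sequentially"
    if "eventually (\<lambda>k. w k \<le> s) sequentially" for s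
    using that
  proof (rule eventually_mono)
    fix k assume "w k \<le> s"
    have "w k + h = sup (w k) h + inf (w k) h" by (rule add_eq_inf_sup)
    also have "\<dots> = sup (w k) h" using disj[of k] by (simp add: inf_commute)
    also have "\<dots> \<le> s" using \<open>w k \<le> s\<close> below[OF that] by simp
    finally show "w k \<le> s - h" by (simp add: le_diff_eq)
  qed
  have bound: "eventually (\<lambda>k. w k \<le> Y - real m *\<^sub>R h) sequentially" for m
  proof (induction m)
    case (Suc m)
    then show ?case using lower[OF Suc] by (simp add: algebra_simps)
  qed (simp add: wY)
  have "real (Suc m) *\<^sub>R h \<le> Y" for m
    using below[OF bound[of m]] by (simp add: algebra_simps)
  then have "real n *\<^sub>R h \<le> sup Y 0" for n
    by (cases n) (auto intro: le_supI1)
  then show ?thesis using arch unfolding archimedean_vl_def by blast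
qed

definition band_topology ::
    "'a::{ordered_real_vector,lattice_ab_group_add_abs} topology \<Rightarrow> 'a \<Rightarrow> 'a topology" where
  "band_topology \<tau> u = (SOME T. locally_solid_on (band_gen u) T \<and> metrizable_space T
        \<and> (\<forall>U. openin T U \<longrightarrow> openin (subtopology \<tau> (band_gen u)) U)
        \<and> (\<forall>s. (\<forall>n. s n \<in> {0..u}) \<and> tvs_cauchy T s \<longrightarrow>
               (\<exists>l\<in>{0..u}. net_tendsto T UNIV (\<le>) s l)))"

definition band_base ::
    "'a::{ordered_real_vector,lattice_ab_group_add_abs} topology \<Rightarrow> 'a \<Rightarrow> nat \<Rightarrow> 'a set" where
  "band_base \<tau> u = (SOME U. solid_base_seq (band_topology \<tau> u) (band_gen u) U)"

lemma band_topology: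
  assumes "lic_solidly_submetrisable \<tau>" "0 \<le> u"
  shows "locally_solid_on (band_gen u) (band_topology \<tau> u) \<and> metrizable_space (band_topology \<tau> u)
        \<and> (\<forall>U. openin (band_topology \<tau> u) U \<longrightarrow> openin (subtopology \<tau> (band_gen u)) U)
        \<and> (\<forall>s. (\<forall>n. s n \<in> {0..u}) \<and> tvs_cauchy (band_topology \<tau> u) s \<longrightarrow>
               (\<exists>l\<in>{0..u}. net_tendsto (band_topology \<tau> u) UNIV (\<le>) s l))"
  unfolding band_topology_def
  by (rule someI_ex) (use assms in \<open>unfold lic_solidly_submetrisable_def, blast\<close>)

lemma solid_base_seq_band_base:
  assumes lic: "lic_solidly_submetrisable \<tau>" and "0 \<le> u"
  shows "solid_base_seq (band_topology \<tau> u) (band_gen u) (band_base \<tau> u)"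
proof -
  have "\<exists>U. solid_base_seq (band_topology \<tau> u) (band_gen u) U"
  proof (rule solid_base_seq_exists)
    show "locally_solid_on (band_gen u) (band_topology \<tau> u)"
      using band_topology[OF assms] by blast
    show "first_countable (band_topology \<tau> u)"
      using band_topology[OF assms] metrizable_imp_first_countable by blast
    show "0 \<in> band_gen u" using ideal_in_band_gen by (rule ideal_in_zero)
  qed
  then show ?thesis unfolding band_base_def by (rule someI_ex)
qed

text \<open>On the band generated by \<open>u\<close>, which contains \<open>|x_a - x| \<and> u\<close>, the topology \<open>\<tau>~_u\<close> is
  coarser than \<open>\<tau>\<close>; solidity of \<open>\<tau>\<close> does the rest.\<close>
lemma net_tendsto_eventually_band_base:
  fixes \<tau> :: "'a::{ordered_real_vector,lattice_ab_group_add_abs} topology"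
  assumes ls: "locally_solid_on UNIV \<tau>" and lic: "lic_solidly_submetrisable \<tau>"
    and conv: "net_tendsto \<tau> A le xs x" and u0: "0 \<le> u"
  shows "\<exists>a0\<in>A. \<forall>a\<in>A. le a0 a \<longrightarrow> inf \<bar>xs a - x\<bar> u \<in> band_base \<tau> u j"
proof -
  obtain W where W: "openin (band_topology \<tau> u) W" "0 \<in> W" "W \<subseteq> band_base \<tau> u j"
    using solid_base_seq_nhd[OF solid_base_seq_band_base[OF lic u0]] by blast
  then have "openin (subtopology \<tau> (band_gen u)) W" using band_topology[OF lic u0] by blast
  then obtain Q where Q: "openin \<tau> Q" "W = Q \<inter> band_gen u" unfolding openin_subtopology by blast
  moreover have "0 \<in> Q" using Q(2) W(2) by blast
  ultimately obtain V W' where VW': "solid_in UNIV V" "openin \<tau> W'" "0 \<in> W'" "W' \<subseteq> V" "V \<subseteq> Q"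
    using ls unfolding locally_solid_on_def by blast
  have lt: "linear_topology_on UNIV \<tau>" using ls unfolding locally_solid_on_def by blast
  have "openin \<tau> {a \<in> UNIV. a - x \<in> W'}" "x \<in> {a \<in> UNIV. a - x \<in> W'}"
    using linear_topology_openin_translate[OF lt _ VW'(2)] VW'(3) by auto
  from net_tendstoD[OF conv this] obtain a0 where "a0 \<in> A" and a0: "\<forall>a\<in>A. le a0 a \<longrightarrow> xs a - x \<in> W'"
    by blast
  have "inf \<bar>xs a - x\<bar> u \<in> band_base \<tau> u j" if "a \<in> A" "le a0 a" for a
  proof -
    let ?e = "inf \<bar>xs a - x\<bar> u"
    have "0 \<le> ?e" using u0 by simp
    have "xs a - x \<in> V" using a0 that VW'(4) by blast
    moreover have "\<bar>?e\<bar> \<le> \<bar>xs a - x\<bar>" using \<open>0 \<le> ?e\<close> by simp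
    ultimately have "?e \<in> V" using VW'(1) unfolding solid_in_def by blast
    moreover have "?e \<in> band_gen u" using \<open>0 \<le> ?e\<close> by (intro band_gen_interval) simp_all
    ultimately show ?thesis using Q(2) VW'(5) W(3) by blast
  qed
  then show ?thesis using \<open>a0 \<in> A\<close> by blast
qed

lemma band_base_order_null:
  fixes e :: "nat \<Rightarrow> 'a::{ordered_real_vector,lattice_ab_group_add_abs}"
  assumes lic: "lic_solidly_submetrisable \<tau>" and "0 \<le> u" and e0: "\<And>k. 0 \<le> e k"
    and fast: "\<And>k. inf (e k) u \<in> band_base \<tau> u (Suc k)"
  shows "\<exists>z. (\<forall>n k. n \<le> k \<longrightarrow> inf (e k) u \<le> z n) \<and> (\<forall>g. (\<forall>n. g \<le> z n) \<longrightarrow> g \<le> 0)"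
proof (rule solid_base_seq_order_null)
  show "solid_base_seq (band_topology \<tau> u) (band_gen u) (band_base \<tau> u)"
    using lic \<open>0 \<le> u\<close> by (rule solid_base_seq_band_base)
  show "linear_topology_on (band_gen u) (band_topology \<tau> u)"
    and "\<forall>s. (\<forall>n. s n \<in> {0..u}) \<and> tvs_cauchy (band_topology \<tau> u) s \<longrightarrow>
           (\<exists>l\<in>{0..u}. net_tendsto (band_topology \<tau> u) UNIV (\<le>) s l)"
    using band_topology[OF lic \<open>0 \<le> u\<close>] unfolding locally_solid_on_def by blast+
  show "inf (e k) u \<in> {0..u}" for k using e0 \<open>0 \<le> u\<close> by simp
qed (use fast ideal_in_band_gen mem_band_gen_self in auto)

lemma le_zero_below_eventual_bounds:
  fixes d u :: "nat \<Rightarrow> 'a::{ordered_real_vector,lattice_ab_group_add_abs}"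
  assumes arch: "archimedean_vl (UNIV :: 'a set)" and lic: "lic_solidly_submetrisable \<tau>"
    and u0: "\<And>N. 0 \<le> u N" and u_bound: "\<And>k. \<bar>d k - x\<bar> \<le> u (Suc k)"
    and fast: "\<And>N k. N \<le> k \<Longrightarrow> inf \<bar>d k - x\<bar> (u N) \<in> band_base \<tau> (u N) (Suc k)"
    and h0: "0 \<le> h"
    and below: "\<And>s. eventually (\<lambda>k. inf \<bar>d k - x\<bar> \<bar>y\<bar> \<le> s) sequentially \<Longrightarrow> h \<le> s"
  shows "h \<le> 0"
proof (rule le_zero_of_disjoint_below_eventual_bounds[OF arch _ _ below])
  show "inf \<bar>d k - x\<bar> \<bar>y\<bar> \<le> \<bar>y\<bar>" for k by simp
  have disj_bound: "inf h (u N) = 0" for N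
  proof -
    have "inf \<bar>d (k + N) - x\<bar> (u N) \<in> band_base \<tau> (u N) (Suc k)" for k
      using fast[of N "k + N"]
        solid_base_seq_antimono[OF solid_base_seq_band_base[OF lic u0], of "Suc k" "Suc (k + N)"]
      by auto
    then obtain z where dom: "\<forall>n k. n \<le> k \<longrightarrow> inf \<bar>d (k + N) - x\<bar> (u N) \<le> z n"
      and null: "\<forall>g. (\<forall>n. g \<le> z n) \<longrightarrow> g \<le> 0"
      using band_base_order_null[OF lic u0[of N], of "\<lambda>k. \<bar>d (k + N) - x\<bar>"] by auto
    show ?thesis
    proof (rule inf_eq_zero_of_truncations_order_null[OF arch u0 _ _ _ h0])
      show "inf \<bar>d (k + N) - x\<bar> (u N) \<le> z n" if "n \<le> k" for n k
        using dom that by blast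
      show "h \<le> s" if "eventually (\<lambda>k. inf \<bar>d (k + N) - x\<bar> \<bar>y\<bar> \<le> s) sequentially" for s
        using that eventually_sequentially_seg[where P = "\<lambda>k. inf \<bar>d k - x\<bar> \<bar>y\<bar> \<le> s"]
        by (intro below) simp
    qed (use null in auto)
  qed
  show "inf h (inf \<bar>d k - x\<bar> \<bar>y\<bar>) = 0" for k
  proof -
    have "inf h (inf \<bar>d k - x\<bar> \<bar>y\<bar>) \<le> inf h (u (Suc k))"
      using u_bound[of k] by (meson inf_mono order_refl le_infI1)
    then show ?thesis using disj_bound[of "Suc k"] h0 by (simp add: antisym)
  qed
qed

lemma regular_sublattice_le_eventual_bound:
  fixes w :: "nat \<Rightarrow> 'a::{ordered_real_vector,lattice_ab_group_add_abs}"
  assumes arch: "archimedean_vl (UNIV :: 'a set)" and reg: "regular_sublattice F"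
    and wF: "\<And>k. w k \<in> F" and "b \<in> F" and wb: "\<And>k. w k \<le> b" and "g \<in> F"
    and lower: "\<And>e. e \<in> F \<Longrightarrow> eventually (\<lambda>k. w k \<le> e) sequentially \<Longrightarrow> g \<le> e"
    and upper: "eventually (\<lambda>k. w k \<le> s) sequentially"
  shows "g \<le> s"
proof -
  obtain K where K: "\<And>k. K \<le> k \<Longrightarrow> w k \<le> s" using upper unfolding eventually_sequentially by blast
  have w_le: "w k \<le> running_max w K (k - K)" if "K \<le> k" for k
    using running_max_ge[of "k - K" "k - K" w K] that by simp
  let ?W = "range (running_max w K)"
  show ?thesis
  proof (rule regular_sublattice_sup_le[OF arch reg _ _ _ \<open>b \<in> F\<close> _ \<open>g \<in> F\<close>])
    show "?W \<subseteq> F"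
      using running_max_in_sublattice[where v = w, OF regular_sublattice_imp_vector_sublattice[OF reg] wF]
      by blast
    show "?W \<noteq> {}" by simp
    show "\<forall>w1\<in>?W. \<forall>w2\<in>?W. \<exists>w3\<in>?W. w1 \<le> w3 \<and> w2 \<le> w3"
    proof (intro ballI)
      fix w1 w2 assume "w1 \<in> ?W" "w2 \<in> ?W"
      then obtain m1 m2 where "w1 = running_max w K m1" "w2 = running_max w K m2" by blast
      then show "\<exists>w3\<in>?W. w1 \<le> w3 \<and> w2 \<le> w3"
        by (intro bexI[of _ "running_max w K (max m1 m2)"]) (auto intro: running_max_mono)
    qed
    show "\<forall>w\<in>?W. w \<le> b" using wb by (auto intro: running_max_le)
    show "\<forall>w\<in>?W. w \<le> s" using K by (auto intro!: running_max_le)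
    show "\<forall>e\<in>F. (\<forall>w\<in>?W. w \<le> e) \<longrightarrow> g \<le> e"
    proof (intro ballI impI)
      fix e assume "e \<in> F" and "\<forall>w\<in>?W. w \<le> e"
      then have "eventually (\<lambda>k. w k \<le> e) sequentially"
        unfolding eventually_sequentially using w_le by (meson order_trans rangeI)
      then show "g \<le> e" using lower \<open>e \<in> F\<close> by blast
    qed
  qed
qed

lemma order_conv_in_of_eventual_bounds:
  fixes w :: "nat \<Rightarrow> 'a::{ordered_real_vector,lattice_ab_group_add_abs}"
  assumes vs: "vector_sublattice F" and "b \<in> F" and w0: "\<And>k. 0 \<le> w k" and wb: "\<And>k. w k \<le> b"
    and null: "\<And>g. g \<in> F \<Longrightarrow>
      (\<And>e. e \<in> F \<Longrightarrow> e \<le> b \<Longrightarrow> eventually (\<lambda>k. w k \<le> e) sequentially \<Longrightarrow> g \<le> e) \<Longrightarrow> g \<le> 0"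
  shows "order_conv_in F UNIV (\<le>) w 0"
proof -
  define B where "B = {e \<in> F. e \<le> b \<and> eventually (\<lambda>k. w k \<le> e) sequentially}"
  show ?thesis
    unfolding order_conv_in_def
  proof (intro exI[of _ B] exI[of _ "\<lambda>a b. b \<le> a"] exI[of _ "\<lambda>a. a"] conjI)
    have "b \<in> B" unfolding B_def using \<open>b \<in> F\<close> wb by simp
    moreover have "inf e1 e2 \<in> B" if "e1 \<in> B" "e2 \<in> B" for e1 e2
      using that vs unfolding B_def by (auto simp: vector_sublattice_inf le_infI1 eventually_conj_iff)
    ultimately show "directed_set B (\<lambda>a b. b \<le> a)"
      unfolding directed_set_def by (auto intro: order_trans) (metis inf.cobounded1 inf.cobounded2)
    show "\<forall>b\<in>B. b \<in> F" "\<forall>b\<in>B. \<forall>b'\<in>B. b' \<le> b \<longrightarrow> b' \<le> b" unfolding B_def by blast+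
    show "\<forall>b\<in>B. 0 \<le> b"
    proof
      fix e assume "e \<in> B"
      then obtain K where "w K \<le> e" unfolding B_def eventually_sequentially by blast
      then show "0 \<le> e" using w0[of K] by (rule order_trans[rotated])
    qed
    show "\<forall>z\<in>F. (\<forall>b\<in>B. z \<le> b) \<longrightarrow> z \<le> 0"
      using null unfolding B_def by blast
    show "\<forall>b0\<in>B. \<exists>a0\<in>UNIV. \<forall>a\<in>UNIV. a0 \<le> a \<longrightarrow> \<bar>w a - 0\<bar> \<le> b0"
      unfolding B_def eventually_sequentially using w0 by auto
  qed
qed

lemma uo_conv_in_of_fast_convergence:
  fixes d u :: "nat \<Rightarrow> 'a::{ordered_real_vector,lattice_ab_group_add_abs}"
  assumes arch: "archimedean_vl (UNIV :: 'a set)" and lic: "lic_solidly_submetrisable \<tau>"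
    and reg: "regular_sublattice F" and "x \<in> F" and dF: "\<And>k. d k \<in> F"
    and u0: "\<And>N. 0 \<le> u N" and u_bound: "\<And>k. \<bar>d k - x\<bar> \<le> u (Suc k)"
    and fast: "\<And>N k. N \<le> k \<Longrightarrow> inf \<bar>d k - x\<bar> (u N) \<in> band_base \<tau> (u N) (Suc k)"
  shows "uo_conv_in F UNIV (\<le>) d x"
  unfolding uo_conv_in_def
proof
  fix y assume "y \<in> F"
  have vs: "vector_sublattice F" using reg by (rule regular_sublattice_imp_vector_sublattice)
  define w where "w k = inf \<bar>d k - x\<bar> \<bar>y\<bar>" for k
  have "\<bar>y\<bar> \<in> F" using vs \<open>y \<in> F\<close> by (rule vector_sublattice_abs)
  have wF: "w k \<in> F" for k
    unfolding w_def using vs dF \<open>x \<in> F\<close> \<open>\<bar>y\<bar> \<in> F\<close>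
    by (simp add: vector_sublattice_inf vector_sublattice_abs vector_sublattice_diff)
  have w0: "0 \<le> w k" and wy: "w k \<le> \<bar>y\<bar>" for k unfolding w_def by simp_all
  have "order_conv_in F UNIV (\<le>) w 0"
  proof (rule order_conv_in_of_eventual_bounds[OF vs \<open>\<bar>y\<bar> \<in> F\<close> w0 wy])
    fix g assume "g \<in> F"
      and lower: "\<And>e. e \<in> F \<Longrightarrow> e \<le> \<bar>y\<bar> \<Longrightarrow> eventually (\<lambda>k. w k \<le> e) sequentially \<Longrightarrow> g \<le> e"
    have "sup g 0 \<le> s" if ev: "eventually (\<lambda>k. w k \<le> s) sequentially" for s
    proof -
      have "g \<le> s"
      proof (rule regular_sublattice_le_eventual_bound[OF arch reg wF \<open>\<bar>y\<bar> \<in> F\<close> wy \<open>g \<in> F\<close> _ ev])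
        fix e assume "e \<in> F" and "eventually (\<lambda>k. w k \<le> e) sequentially"
        then have "g \<le> inf e \<bar>y\<bar>"
          using vs \<open>\<bar>y\<bar> \<in> F\<close> wy
          by (intro lower) (auto simp: vector_sublattice_inf elim: eventually_mono)
        then show "g \<le> e" by simp
      qed
      moreover obtain K where "w K \<le> s" using ev unfolding eventually_sequentially by blast
      then have "0 \<le> s" using w0[of K] by (rule order_trans[rotated])
      ultimately show ?thesis by simp
    qed
    then have "sup g 0 \<le> 0"
      by (intro le_zero_below_eventual_bounds[OF arch lic u0 u_bound fast]) (simp_all add: w_def)
    then show "g \<le> 0" by simp
  qed
  then show "order_conv_in F UNIV (\<le>) (\<lambda>a. inf \<bar>d a - x\<bar> \<bar>y\<bar>) 0"
    unfolding w_def .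
qed

section \<open>Choosing the indices\<close>

lemma net_tendsto_largest_index:
  assumes T: "Hausdorff_space T" and lim: "net_tendsto T A le xs x"
    and "aL \<in> A" and largest: "\<forall>a\<in>A. le a aL"
  shows "x = xs aL"
proof (rule ccontr)
  assume "x \<noteq> xs aL"
  have eventually_at_aL: "xs aL \<in> U" if "openin T U" "x \<in> U" for U
    using net_tendstoD[OF lim that] largest \<open>aL \<in> A\<close> by blast
  have "x \<in> topspace T" using lim unfolding net_tendsto_def by blast
  then have "xs aL \<in> topspace T" using eventually_at_aL[OF openin_topspace] by blast
  then obtain U V where "openin T U" "openin T V" "x \<in> U" "xs aL \<in> V" "disjnt U V"
    using T \<open>x \<in> topspace T\<close> \<open>x \<noteq> xs aL\<close> unfolding Hausdorff_space_def by metis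
  then show False using eventually_at_aL by (auto simp: disjnt_def)
qed

lemma uo_conv_in_const:
  fixes x :: "'a::{ordered_real_vector,lattice_ab_group_add_abs}"
  assumes "vector_sublattice F"
  shows "uo_conv_in F UNIV (\<le>) (\<lambda>n::nat. x) x"
  unfolding uo_conv_in_def
proof
  fix y assume "y \<in> F"
  show "order_conv_in F UNIV (\<le>) (\<lambda>n::nat. inf \<bar>x - x\<bar> \<bar>y\<bar>) 0"
    unfolding order_conv_in_def
  proof (intro exI[of _ "{0::'a}"] exI[of _ "(\<le>) :: 'a \<Rightarrow> 'a \<Rightarrow> bool"] exI[of _ "\<lambda>a::'a. a"] conjI)
    show "directed_set {0::'a} (\<le>)" unfolding directed_set_def by simp
    show "\<forall>b\<in>{0::'a}. b \<in> F" using vector_sublattice_zero[OF assms] by simp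
  qed (auto simp: inf_absorb1)
qed

lemma directed_set_eventually_all_le:
  fixes K :: nat
  assumes dir: "directed_set A le"
    and ev: "\<And>N. N \<le> K \<Longrightarrow> \<exists>a0\<in>A. \<forall>a\<in>A. le a0 a \<longrightarrow> P N a"
  shows "\<exists>a0\<in>A. \<forall>a\<in>A. le a0 a \<longrightarrow> (\<forall>N\<le>K. P N a)"
  using ev
proof (induction K)
  case 0
  then show ?case by auto
next
  case (Suc K)
  then obtain a1 where a1: "a1 \<in> A" "\<forall>a\<in>A. le a1 a \<longrightarrow> (\<forall>N\<le>K. P N a)" by force
  obtain a2 where a2: "a2 \<in> A" "\<forall>a\<in>A. le a2 a \<longrightarrow> P (Suc K) a" using Suc.prems by blast
  obtain c where c: "c \<in> A" "le a1 c" "le a2 c"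
    using dir a1(1) a2(1) unfolding directed_set_def by blast
  have "le a1 a \<and> le a2 a" if "a \<in> A" "le c a" for a
    using dir a1(1) a2(1) c that unfolding directed_set_def by blast
  then have "\<forall>a\<in>A. le c a \<longrightarrow> (\<forall>N\<le>Suc K. P N a)"
    using a1 a2 by (auto simp: le_Suc_eq)
  then show ?case using c(1) by blast
qed

lemma directed_set_strictly_above:
  assumes dir: "directed_set A le" and no_largest: "\<forall>c\<in>A. \<exists>d\<in>A. \<not> le d c" and "c \<in> A"
  shows "\<exists>e\<in>A. le c e \<and> (\<forall>b\<in>A. le b c \<longrightarrow> strictly le b e)"
proof -
  obtain d where "d \<in> A" "\<not> le d c" using no_largest \<open>c \<in> A\<close> by blast
  moreover obtain e where "e \<in> A" "le c e" "le d e"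
    using dir \<open>c \<in> A\<close> \<open>d \<in> A\<close> unfolding directed_set_def by blast
  moreover have "\<forall>a\<in>A. \<forall>b\<in>A. \<forall>c\<in>A. le a b \<longrightarrow> le b c \<longrightarrow> le a c"
    using dir unfolding directed_set_def by blast
  ultimately show ?thesis unfolding strictly_def using \<open>c \<in> A\<close> by metis
qed

definition responses :: "('i list \<Rightarrow> 'i \<Rightarrow> 'i) \<Rightarrow> 'i list \<Rightarrow> 'i list" where
  "responses pick ts = foldl (\<lambda>rs t. rs @ [pick rs t]) [] ts"

lemma responses_snoc:
  "responses pick (ts @ [t]) = responses pick ts @ [pick (responses pick ts) t]"
  unfolding responses_def by simp

lemma responses_upt:
  "responses pick (map ts [0..<n]) = map (\<lambda>k. last (responses pick (map ts [0..<Suc k]))) [0..<n]"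
proof (induction n)
  case (Suc n)
  then show ?case by (simp add: responses_snoc)
qed (simp add: responses_def)

definition partial_bound :: "('i \<Rightarrow> 'a::lattice_ab_group_add_abs) \<Rightarrow> 'a \<Rightarrow> 'i list \<Rightarrow> nat \<Rightarrow> 'a" where
  "partial_bound xs x prev N = \<bar>x\<bar> + (\<Sum>i<N. \<bar>xs (prev ! i)\<bar>)"

definition fast_index :: "'a::{ordered_real_vector,lattice_ab_group_add_abs} topology \<Rightarrow>
    ('i \<Rightarrow> 'a) \<Rightarrow> 'a \<Rightarrow> 'i list \<Rightarrow> 'i \<Rightarrow> bool" where
  "fast_index \<tau> xs x prev a \<longleftrightarrow> (\<forall>N\<le>length prev.
     inf \<bar>xs a - x\<bar> (partial_bound xs x prev N)
       \<in> band_base \<tau> (partial_bound xs x prev N) (Suc (length prev)))"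

definition next_index :: "'a::{ordered_real_vector,lattice_ab_group_add_abs} topology \<Rightarrow> 'i set \<Rightarrow>
    ('i \<Rightarrow> 'i \<Rightarrow> bool) \<Rightarrow> ('i \<Rightarrow> 'a) \<Rightarrow> 'a \<Rightarrow> 'i list \<Rightarrow> 'i \<Rightarrow> 'i" where
  "next_index \<tau> A le xs x prev t = (SOME a. a \<in> A \<and> strictly le t a
      \<and> (prev \<noteq> [] \<longrightarrow> strictly le (last prev) a) \<and> fast_index \<tau> xs x prev a)"

lemma next_index:
  fixes \<tau> :: "'a::{ordered_real_vector,lattice_ab_group_add_abs} topology"
  assumes ls: "locally_solid_on UNIV \<tau>" and lic: "lic_solidly_submetrisable \<tau>"
    and dir: "directed_set A le" and conv: "net_tendsto \<tau> A le xs x"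
    and no_largest: "\<forall>c\<in>A. \<exists>d\<in>A. \<not> le d c" and "t \<in> A" and prev: "set prev \<subseteq> A"
  defines "a \<equiv> next_index \<tau> A le xs x prev t"
  shows "a \<in> A \<and> strictly le t a \<and> (prev \<noteq> [] \<longrightarrow> strictly le (last prev) a)
      \<and> fast_index \<tau> xs x prev a"
proof -
  have trans: "le a c" if "a \<in> A" "b \<in> A" "c \<in> A" "le a b" "le b c" for a b c
    using dir that unfolding directed_set_def by blast
  have upper: "\<exists>c\<in>A. le a c \<and> le b c" if "a \<in> A" "b \<in> A" for a b
    using dir that unfolding directed_set_def by blast
  have "0 \<le> partial_bound xs x prev N" for N
    unfolding partial_bound_def by (simp add: sum_nonneg add_nonneg_nonneg)
  then have "\<exists>a0\<in>A. \<forall>a\<in>A. le a0 a \<longrightarrow> (\<forall>N\<le>length prev. inf \<bar>xs a - x\<bar> (partial_bound xs x prev N)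
       \<in> band_base \<tau> (partial_bound xs x prev N) (Suc (length prev)))"
    by (intro directed_set_eventually_all_le[OF dir] net_tendsto_eventually_band_base[OF ls lic conv])
  then obtain a0 where "a0 \<in> A" and a0: "\<forall>a\<in>A. le a0 a \<longrightarrow> fast_index \<tau> xs x prev a"
    unfolding fast_index_def by blast
  define p where "p = (if prev = [] then t else last prev)"
  have "p \<in> A" unfolding p_def using \<open>t \<in> A\<close> prev by auto
  obtain c1 where "c1 \<in> A" "le a0 c1" "le t c1" using upper[OF \<open>a0 \<in> A\<close> \<open>t \<in> A\<close>] by blast
  obtain c where "c \<in> A" "le c1 c" "le p c" using upper[OF \<open>c1 \<in> A\<close> \<open>p \<in> A\<close>] by blast
  obtain e where "e \<in> A" "le c e" and e: "\<forall>b\<in>A. le b c \<longrightarrow> strictly le b e"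
    using directed_set_strictly_above[OF dir no_largest \<open>c \<in> A\<close>] by blast
  have "fast_index \<tau> xs x prev e"
    using a0 \<open>e \<in> A\<close> trans[OF \<open>a0 \<in> A\<close> \<open>c1 \<in> A\<close> \<open>e \<in> A\<close> \<open>le a0 c1\<close>
        trans[OF \<open>c1 \<in> A\<close> \<open>c \<in> A\<close> \<open>e \<in> A\<close> \<open>le c1 c\<close> \<open>le c e\<close>]] by blast
  moreover have "strictly le t e" "strictly le p e"
    using e \<open>t \<in> A\<close> \<open>p \<in> A\<close> trans[OF \<open>t \<in> A\<close> \<open>c1 \<in> A\<close> \<open>c \<in> A\<close> \<open>le t c1\<close> \<open>le c1 c\<close>]
      \<open>le p c\<close> by blast+
  ultimately have "\<exists>a. a \<in> A \<and> strictly le t a \<and> (prev \<noteq> [] \<longrightarrow> strictly le (last prev) a)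
      \<and> fast_index \<tau> xs x prev a"
    using \<open>e \<in> A\<close> unfolding p_def by (intro exI[of _ e]) (auto split: if_splits)
  then show ?thesis unfolding a_def next_index_def by (rule someI_ex)
qed

lemma responses_next_index:
  fixes \<tau> :: "'a::{ordered_real_vector,lattice_ab_group_add_abs} topology"
  assumes ls: "locally_solid_on UNIV \<tau>" and lic: "lic_solidly_submetrisable \<tau>"
    and dir: "directed_set A le" and conv: "net_tendsto \<tau> A le xs x"
    and no_largest: "\<not> (\<exists>aL\<in>A. \<forall>a\<in>A. le a aL)" and tsA: "\<forall>n. ts n \<in> A"
  defines "\<alpha> \<equiv> \<lambda>n. last (responses (next_index \<tau> A le xs x) (map ts [0..<Suc n]))"
  shows "\<alpha> k \<in> A \<and> strictly le (ts k) (\<alpha> k) \<and> strictly le (\<alpha> k) (\<alpha> (Suc k))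
    \<and> fast_index \<tau> xs x (map \<alpha> [0..<k]) (\<alpha> k)"
proof -
  let ?pick = "next_index \<tau> A le xs x"
  have step: "\<alpha> k = ?pick (map \<alpha> [0..<k]) (ts k)" for k
  proof -
    have "\<alpha> k = last (responses ?pick (map ts [0..<k] @ [ts k]))" unfolding \<alpha>_def by simp
    also have "\<dots> = ?pick (responses ?pick (map ts [0..<k])) (ts k)" by (simp add: responses_snoc)
    also have "responses ?pick (map ts [0..<k]) = map \<alpha> [0..<k]"
      unfolding \<alpha>_def by (rule responses_upt)
    finally show ?thesis .
  qed
  have \<alpha>: "\<alpha> k \<in> A \<and> strictly le (ts k) (\<alpha> k)
      \<and> (map \<alpha> [0..<k] \<noteq> [] \<longrightarrow> strictly le (last (map \<alpha> [0..<k])) (\<alpha> k))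
      \<and> fast_index \<tau> xs x (map \<alpha> [0..<k]) (\<alpha> k)" for k
  proof (induction k rule: less_induct)
    case (less k)
    then have "set (map \<alpha> [0..<k]) \<subseteq> A" by auto
    then show ?case unfolding step[of k]
      using next_index[OF ls lic dir conv _ tsA[rule_format]] no_largest by blast
  qed
  then show ?thesis using \<alpha>[of "Suc k"] by simp
qed

lemma uo_convergent_subsequence_strategy:
  fixes \<tau> :: "'a::{ordered_real_vector,lattice_ab_group_add_abs} topology"
    and A :: "'i set" and xs :: "'i \<Rightarrow> 'a"
  assumes arch: "archimedean_vl (UNIV :: 'a set)" and ls: "locally_solid_on UNIV \<tau>"
    and lic: "lic_solidly_submetrisable \<tau>" and reg: "regular_sublattice F"
    and dir: "directed_set A le" and netF: "\<forall>a\<in>A. xs a \<in> F" and "x \<in> F"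
    and conv: "net_tendsto \<tau> A le xs x" and no_largest: "\<not> (\<exists>aL\<in>A. \<forall>a\<in>A. le a aL)"
  shows "\<exists>strat :: 'i list \<Rightarrow> 'i. \<forall>ts :: nat \<Rightarrow> 'i. (\<forall>n. ts n \<in> A) \<longrightarrow>
           (let \<alpha> = (\<lambda>n. strat (map ts [0..<Suc n])) in
              (\<forall>n. \<alpha> n \<in> A) \<and> (\<forall>n. strictly le (\<alpha> n) (\<alpha> (Suc n)))
              \<and> (\<forall>n. strictly le (ts n) (\<alpha> n))
              \<and> uo_conv_in F UNIV (\<le>) (\<lambda>n. xs (\<alpha> n)) x)"
proof (intro exI[of _ "\<lambda>l. last (responses (next_index \<tau> A le xs x) l)"] allI impI)
  fix ts :: "nat \<Rightarrow> 'i" assume tsA: "\<forall>n. ts n \<in> A"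
  define \<alpha> where "\<alpha> n = last (responses (next_index \<tau> A le xs x) (map ts [0..<Suc n]))" for n
  note \<alpha> = responses_next_index[OF ls lic dir conv no_largest tsA, folded \<alpha>_def]
  \<comment> \<open>the \<open>partial_bound\<close> against which \<open>\<alpha> N, \<alpha> (N + 1), \<dots>\<close> were chosen\<close>
  define u where "u N = \<bar>x\<bar> + (\<Sum>i<N. \<bar>xs (\<alpha> i)\<bar>)" for N
  have "uo_conv_in F UNIV (\<le>) (\<lambda>n. xs (\<alpha> n)) x"
  proof (rule uo_conv_in_of_fast_convergence[OF arch lic reg \<open>x \<in> F\<close>])
    show "xs (\<alpha> k) \<in> F" for k using netF \<alpha> by blast
    show "0 \<le> u N" for N unfolding u_def by (simp add: sum_nonneg add_nonneg_nonneg)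
    show "\<bar>xs (\<alpha> k) - x\<bar> \<le> u (Suc k)" for k
    proof -
      have "\<bar>xs (\<alpha> k) - x\<bar> \<le> \<bar>x\<bar> + \<bar>xs (\<alpha> k)\<bar>"
        using abs_triangle_ineq4[of "xs (\<alpha> k)" x] by (simp add: add.commute)
      also have "\<dots> \<le> \<bar>x\<bar> + (\<bar>xs (\<alpha> k)\<bar> + (\<Sum>i<k. \<bar>xs (\<alpha> i)\<bar>))"
        by (simp add: sum_nonneg)
      finally show ?thesis unfolding u_def by (simp add: add.commute)
    qed
    show "inf \<bar>xs (\<alpha> k) - x\<bar> (u N) \<in> band_base \<tau> (u N) (Suc k)" if "N \<le> k" for N k
    proof -
      have "partial_bound xs x (map \<alpha> [0..<k]) N = u N"
        unfolding partial_bound_def u_def using that by (auto intro!: sum.cong)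
      then show ?thesis using \<alpha>[of k] that unfolding fast_index_def by auto
    qed
  qed
  then show "let \<alpha> = (\<lambda>n. last (responses (next_index \<tau> A le xs x) (map ts [0..<Suc n]))) in
      (\<forall>n. \<alpha> n \<in> A) \<and> (\<forall>n. strictly le (\<alpha> n) (\<alpha> (Suc n))) \<and> (\<forall>n. strictly le (ts n) (\<alpha> n))
      \<and> uo_conv_in F UNIV (\<le>) (\<lambda>n. xs (\<alpha> n)) x"
    unfolding Let_def \<alpha>_def[symmetric] using \<alpha> by blast
qed

lemma uo_convergent_strict_subsequence:
  fixes \<tau> :: "'a::{ordered_real_vector,lattice_ab_group_add_abs} topology"
    and A :: "'i set" and xs :: "'i \<Rightarrow> 'a"
  assumes arch: "archimedean_vl (UNIV :: 'a set)" and ls: "locally_solid_on UNIV \<tau>"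
    and lic: "lic_solidly_submetrisable \<tau>" and reg: "regular_sublattice F"
    and dir: "directed_set A le" and netF: "\<forall>a\<in>A. xs a \<in> F" and xF: "x \<in> F"
    and conv: "net_tendsto \<tau> A le xs x" and no_largest: "\<not> (\<exists>aL\<in>A. \<forall>a\<in>A. le a aL)"
  shows "\<exists>\<alpha> :: nat \<Rightarrow> 'i. (\<forall>n. \<alpha> n \<in> A) \<and> (\<forall>n. strictly le (\<alpha> n) (\<alpha> (Suc n)))
      \<and> uo_conv_in F UNIV (\<le>) (\<lambda>n. xs (\<alpha> n)) x"
proof -
  obtain a0 where "a0 \<in> A" using dir unfolding directed_set_def by blast
  obtain strat :: "'i list \<Rightarrow> 'i" where "\<forall>ts. (\<forall>n. ts n \<in> A) \<longrightarrow> (let \<alpha> = (\<lambda>n. strat (map ts [0..<Suc n])) in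
       (\<forall>n. \<alpha> n \<in> A) \<and> (\<forall>n. strictly le (\<alpha> n) (\<alpha> (Suc n))) \<and> (\<forall>n. strictly le (ts n) (\<alpha> n))
       \<and> uo_conv_in F UNIV (\<le>) (\<lambda>n. xs (\<alpha> n)) x)"
    using uo_convergent_subsequence_strategy[OF assms] by (elim exE)
  from this[rule_format, of "\<lambda>_. a0"] \<open>a0 \<in> A\<close> show ?thesis
    unfolding Let_def by (intro exI[of _ "\<lambda>n. strat (map (\<lambda>_. a0) [0..<Suc n])"]) simp
qed

lemma uo_convergent_monotone_subsequence:
  fixes \<tau> :: "'a::{ordered_real_vector,lattice_ab_group_add_abs} topology"
    and A :: "'i set" and xs :: "'i \<Rightarrow> 'a"
  assumes arch: "archimedean_vl (UNIV :: 'a set)" and ls: "locally_solid_on UNIV \<tau>"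
    and lic: "lic_solidly_submetrisable \<tau>" and reg: "regular_sublattice F"
    and dir: "directed_set A le" and netF: "\<forall>a\<in>A. xs a \<in> F" and xF: "x \<in> F"
    and conv: "net_tendsto \<tau> A le xs x"
  shows "\<exists>\<alpha> :: nat \<Rightarrow> 'i. (\<forall>n. \<alpha> n \<in> A) \<and> (\<forall>n. le (\<alpha> n) (\<alpha> (Suc n)))
      \<and> uo_conv_in F UNIV (\<le>) (\<lambda>n. xs (\<alpha> n)) x"
proof (cases "\<exists>aL\<in>A. \<forall>a\<in>A. le a aL")
  case True
  then obtain aL where aL: "aL \<in> A" "\<forall>a\<in>A. le a aL" by blast
  have "Hausdorff_space \<tau>" using ls unfolding locally_solid_on_def linear_topology_on_def by blast
  then have "x = xs aL" by (rule net_tendsto_largest_index[OF _ conv aL])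
  then have "uo_conv_in F UNIV (\<le>) (\<lambda>n::nat. xs aL) x"
    using uo_conv_in_const[OF regular_sublattice_imp_vector_sublattice[OF reg], of "xs aL"] by simp
  with aL show ?thesis by (intro exI[of _ "\<lambda>_. aL"]) simp
next
  case False
  then show ?thesis
    using uo_convergent_strict_subsequence[OF assms] unfolding strictly_def by blast
qed

theorem theorem4p1:
  fixes \<tau> :: "'a::{ordered_real_vector,lattice_ab_group_add_abs} topology"
    and F :: "'a set" and A :: "'i set" and le :: "'i \<Rightarrow> 'i \<Rightarrow> bool"
    and xs :: "'i \<Rightarrow> 'a" and x :: 'a
  assumes arch: "archimedean_vl (UNIV :: 'a set)"
    and ls: "locally_solid_on UNIV \<tau>"
    and lic: "lic_solidly_submetrisable \<tau>"
    and reg: "regular_sublattice F"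
    and dir: "directed_set A le"
    and netF: "\<forall>a\<in>A. xs a \<in> F"
    and xF: "x \<in> F"
    and conv: "net_tendsto \<tau> A le xs x"
  shows "(\<forall>aL\<in>A. (\<forall>a\<in>A. le a aL) \<longrightarrow> x = xs aL)
    \<and> ((\<not> (\<exists>aL\<in>A. \<forall>a\<in>A. le a aL)) \<longrightarrow>
        (\<exists>strat :: 'i list \<Rightarrow> 'i. \<forall>ts :: nat \<Rightarrow> 'i. (\<forall>n. ts n \<in> A) \<longrightarrow>
           (let \<alpha> = (\<lambda>n. strat (map ts [0..<Suc n])) in
              (\<forall>n. \<alpha> n \<in> A) \<and> (\<forall>n. strictly le (\<alpha> n) (\<alpha> (Suc n)))
              \<and> (\<forall>n. strictly le (ts n) (\<alpha> n))
              \<and> uo_conv_in F UNIV (\<le>) (\<lambda>n. xs (\<alpha> n)) x)))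
    \<and> (\<exists>\<alpha> :: nat \<Rightarrow> 'i. (\<forall>n. \<alpha> n \<in> A) \<and> (\<forall>n. le (\<alpha> n) (\<alpha> (Suc n)))
              \<and> uo_conv_in F UNIV (\<le>) (\<lambda>n. xs (\<alpha> n)) x)
    \<and> ((\<not> (\<exists>aL\<in>A. \<forall>a\<in>A. le a aL)) \<longrightarrow>
        (\<exists>\<alpha> :: nat \<Rightarrow> 'i. (\<forall>n. \<alpha> n \<in> A) \<and> (\<forall>n. strictly le (\<alpha> n) (\<alpha> (Suc n)))
              \<and> uo_conv_in F UNIV (\<le>) (\<lambda>n. xs (\<alpha> n)) x))"
proof -
  have "Hausdorff_space \<tau>" using ls unfolding locally_solid_on_def linear_topology_on_def by blast
  then have "x = xs aL" if "aL \<in> A" "\<forall>a\<in>A. le a aL" for aL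
    using net_tendsto_largest_index[OF _ conv that] by blast
  then show ?thesis
    using uo_convergent_subsequence_strategy[OF assms]
      uo_convergent_monotone_subsequence[OF assms]
      uo_convergent_strict_subsequence[OF assms]
    by (intro conjI impI ballI) simp_all
qed

end
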